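(* Assume (A1)–(A4) hold and that the aggregator satisfies the robustness property (R) at every iteration. Let $$A=\frac{48BL^2c\delta}{p}+\frac{6(1-p)}{p}\Big(\frac{4c\delta}{p}+\frac{1}{2G}\Big)\Big(\omega L^2+\frac{(1+\omega)\mathcal L_\pm^2}{b}\Big)+\frac{6(1-p)}{p}\Big(\frac{4c\delta(1+\omega)}{p}+\frac{\omega}{2G}\Big)L_\pm^2,$$ and suppose $0<\gamma\le \frac{1}{L+\sqrt A}$ and $48cB\delta<p$. Then for every $K\ge 0$, if $\widehat x^K$ is chosen uniformly at random from $\{x^0,x^1,\dots,x^K\}$ (the iterates of Byz-VR-MARINA), $$\mathbb E\big[\|\nabla f(\widehat x^K)\|^2\big]\le \frac{2\,\mathbb E[\Phi_0]}{\gamma\big(1-\frac{48Bc\delta}{p}\big)(K+1)}+\frac{24c\delta\zeta^2}{p-48Bc\delta},$$ where $\Phi_0=f(x^0)-f_*+\frac{\gamma}{p}\|g^0-\nabla f(x^0)\|^2$. (In particular, for $B=0$: $\mathbb E\|\nabla f(\widehat x^K)\|^2\le \frac{2\mathbb E[\Phi_0]}{\gamma(K+1)}+\frac{24c\delta\zeta^2}{p}$.)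
   Context: Setting. There are $n$ workers indexed by $[n]=\mathcal G\sqcup\mathcal B$: $\mathcal G$ is the set of good workers, $G=|\mathcal G|\ge2$, and $\mathcal B$ is the set of Byzantine workers with $|\mathcal B|\le\delta n$, $0\le\delta<1/2$. For $i\in\mathcal G$, $f_i(x)=\frac1m\sum_{j=1}^m f_{i,j}(x)$ with differentiable $f_{i,j}:\mathbb R^d\to\mathbb R$, and $f=\frac1G\sum_{i\in\mathcal G}f_i$. All expectations $\mathbb E$ are full expectations. (A1) $f$ is $L$-smooth ($\|\nabla f(x)-\nabla f(y)\|\le L\|x-y\|$ for all $x,y$) and $f_*=\inf_x f(x)>-\infty$. (A2) ($(B,\zeta^2)$-heterogeneity) For some $B,\zeta\ge0$: $\frac1G\sum_{i\in\mathcal G}\|\nabla f_i(x)-\nabla f(x)\|^2\le B\|\nabla f(x)\|^2+\zeta^2$ for all $x$. (A3) (global Hessian variance) For some $L_\pm\ge0$: $\frac1G\sum_{i\in\mathcal G}\|\nabla f_i(x)-\nabla f_i(y)\|^2-\|\nabla f(x)-\nabla f(y)\|^2\le L_\pm^2\|x-y\|^2$ for all $x,y$. (A4) (local Hessian variance) There is a batch size $b\ge1$ and, for each $i\in\mathcal G$ and $x,y$, a random vector $\widehat\Delta_i(x,y)$ with $\mathbb E[\widehat\Delta_i(x,y)]=\Delta_i(x,y):=\nabla f_i(x)-\nabla f_i(y)$ and $\frac1G\sum_{i\in\mathcal G}\mathbb E\|\widehat\Delta_i(x,y)-\Delta_i(x,y)\|^2\le\frac{\mathcal L_\pm^2}{b}\|x-y\|^2$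 for some $\mathcal L_\pm\ge0$. Compressor: $\mathcal Q:\mathbb R^d\to\mathbb R^d$ is a stochastic map with $\mathbb E[\mathcal Q(x)]=x$ and $\mathbb E\|\mathcal Q(x)-x\|^2\le\omega\|x\|^2$ for all $x$, for some $\omega\ge0$. Algorithm Byz-VR-MARINA with stepsize $\gamma>0$, probability $p\in(0,1]$, start $x^0$, and initial vector $g^0\in\mathbb R^d$ (possibly random). For $k=0,1,2,\dots$: draw $c_k\sim\mathrm{Bernoulli}(p)$ independently of everything else; set $x^{k+1}=x^k-\gamma g^k$; each good worker $i\in\mathcal G$ sets $g_i^{k+1}=\nabla f_i(x^{k+1})$ if $c_k=1$ and $g_i^{k+1}=g^k+\mathcal Q(\widehat\Delta_i(x^{k+1},x^k))$ if $c_k=0$, where, conditionally on the past and on $c_k$, the estimators $\widehat\Delta_i$ and the compressions are sampled freshly and independently across $i\in\mathcal G$ (the compression being applied with fresh randomness to its input); each Byzantine worker $i\in\mathcal B$ sends an arbitrary vector $g_i^{k+1}$ (which may depend on everything); finally $g^{k+1}=\mathrm{ARAgg}(g_1^{k+1},\dots,g_n^{k+1})$. Robustness property (R) of the aggregator, with constant $c>0$: for every $k\ge0$, $\mathbb E\|g^{k+1}-\bar g^{k+1}\|^2\le\frac{c\delta}{G(G-1)}\sum_{i,l\in\mathcal G}\mathbb E\|g_i^{k+1}-g_l^{k+1}\|^2$, where $\bar g^{k+1}=\frac1G\sum_{i\in\mathcal G}g_i^{k+1}$. *)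

theory Defs
  imports "HOL-Probability.Probability"
begin

definition loc_f :: "nat \<Rightarrow> (nat \<Rightarrow> nat \<Rightarrow> 'a \<Rightarrow> real) \<Rightarrow> nat \<Rightarrow> 'a \<Rightarrow> real" where
  "loc_f m fij i x = (\<Sum>j<m. fij i j x) / real m"

definition loc_grad :: "nat \<Rightarrow> (nat \<Rightarrow> nat \<Rightarrow> 'a \<Rightarrow> 'a::real_vector) \<Rightarrow> nat \<Rightarrow> 'a \<Rightarrow> 'a" where
  "loc_grad m dfij i x = (1 / real m) *\<^sub>R (\<Sum>j<m. dfij i j x)"

definition glob_f :: "nat set \<Rightarrow> nat \<Rightarrow> (nat \<Rightarrow> nat \<Rightarrow> 'a \<Rightarrow> real) \<Rightarrow> 'a \<Rightarrow> real" where
  "glob_f Gs m fij x = (\<Sum>i\<in>Gs. loc_f m fij i x) / real (card Gs)"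

definition glob_grad :: "nat set \<Rightarrow> nat \<Rightarrow> (nat \<Rightarrow> nat \<Rightarrow> 'a \<Rightarrow> 'a::real_vector) \<Rightarrow> 'a \<Rightarrow> 'a" where
  "glob_grad Gs m dfij x = (1 / real (card Gs)) *\<^sub>R (\<Sum>i\<in>Gs. loc_grad m dfij i x)"

definition constA :: "real \<Rightarrow> real \<Rightarrow> real \<Rightarrow> real \<Rightarrow> real \<Rightarrow> real \<Rightarrow> real \<Rightarrow> real \<Rightarrow> real \<Rightarrow> real \<Rightarrow> real" where
  "constA B L c \<delta> p G \<omega> LL b Lpm =
     48 * B * L^2 * c * \<delta> / p
   + 6 * (1 - p) / p * (4 * c * \<delta> / p + 1 / (2 * G)) * (\<omega> * L^2 + (1 + \<omega>) * LL^2 / b)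
   + 6 * (1 - p) / p * (4 * c * \<delta> * (1 + \<omega>) / p + \<omega> / (2 * G)) * Lpm^2"

end

theory Submission
  imports Defs
begin

text \<open>Put \<open>\<Phi>\<^sub>k = f(x\<^sup>k) - f\<^sub>* + (\<gamma>/p) \<parallel>g\<^sup>k - \<nabla>f(x\<^sup>k)\<parallel>\<^sup>2\<close>. The descent lemma for the \<open>L\<close>-smooth \<open>f\<close>
  bounds the decrease of \<open>f\<close> along \<open>x\<^sup>k\<^sup>+\<^sup>1 = x\<^sup>k - \<gamma> g\<^sup>k\<close> up to the estimator error.
  That error splits into the error of the average \<open>\<bar>g\<^sup>k\<^sup>+\<^sup>1\<close> of the good messages, which the
  Bernoulli reset contracts by the factor \<open>1 - p\<close> up to sampling and compression noise of
  order \<open>\<parallel>x\<^sup>k\<^sup>+\<^sup>1 - x\<^sup>k\<parallel>\<^sup>2\<close>, and the aggregation error, which (R) bounds by the spread of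
  the good messages: heterogeneity (A2) controls it after a reset, the Hessian variances (A3),
  (A4) and the compressor otherwise. Under the stepsize condition all \<open>\<parallel>g\<^sup>k\<parallel>\<^sup>2\<close> terms cancel,
  so \<open>\<Phi>\<^sub>k\<^sub>+\<^sub>1 + \<alpha> \<parallel>\<nabla>f(x\<^sup>k)\<parallel>\<^sup>2 \<le> \<Phi>\<^sub>k + \<beta>\<close> in expectation, and telescoping gives the bound.\<close>

lemma power2_norm_add:
  "(norm (u + v))\<^sup>2 = (norm u)\<^sup>2 + 2 * (u \<bullet> v) + (norm (v::'a::real_inner))\<^sup>2"
  by (simp add: power2_norm_eq_inner inner_add_left inner_add_right inner_commute)

lemma power2_norm_diff:
  "(norm (u - v))\<^sup>2 = (norm u)\<^sup>2 - 2 * (u \<bullet> v) + (norm (v::'a::real_inner))\<^sup>2"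
  by (simp add: power2_norm_eq_inner inner_diff_left inner_diff_right inner_commute)

lemma power2_norm_add_le:
  fixes u v :: "'a::real_normed_vector"
  shows "(norm (u + v))\<^sup>2 \<le> 2 * (norm u)\<^sup>2 + 2 * (norm v)\<^sup>2"
proof -
  have "(norm (u + v))\<^sup>2 \<le> (norm u + norm v)\<^sup>2"
    by (rule power_mono[OF norm_triangle_ineq]) simp
  also have "\<dots> \<le> 2 * (norm u)\<^sup>2 + 2 * (norm v)\<^sup>2"
    using sum_squares_bound[of "norm u" "norm v"] by (simp add: power2_sum)
  finally show ?thesis .
qed

lemma power2_norm_add_le_weighted:
  fixes u v :: "'a::real_inner"
  assumes "t > 0"
  shows "(norm (u + v))\<^sup>2 \<le> (1 + t) * (norm u)\<^sup>2 + (1 + 1 / t) * (norm v)\<^sup>2"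
proof -
  have "0 \<le> (norm (sqrt t *\<^sub>R u - (1 / sqrt t) *\<^sub>R v))\<^sup>2" by simp
  also have "\<dots> = t * (norm u)\<^sup>2 - 2 * (u \<bullet> v) + (1 / t) * (norm v)\<^sup>2"
    using assms by (simp add: power2_norm_diff power_mult_distrib power_divide)
  finally show ?thesis
    by (simp add: power2_norm_add algebra_simps)
qed

lemma sum_pairwise_norm_diff_sq:
  fixes u :: "'i \<Rightarrow> 'a::real_inner"
  assumes "finite I"
  shows "(\<Sum>i\<in>I. \<Sum>l\<in>I. (norm (u i - u l))\<^sup>2)
       = 2 * real (card I) * (\<Sum>i\<in>I. (norm (u i))\<^sup>2) - 2 * (norm (\<Sum>i\<in>I. u i))\<^sup>2"
proof -
  have "(\<Sum>i\<in>I. \<Sum>l\<in>I. u i \<bullet> u l) = (\<Sum>i\<in>I. u i) \<bullet> (\<Sum>l\<in>I. u l)"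
    by (subst inner_sum_left) (simp only: inner_sum_right)
  then have "(\<Sum>i\<in>I. \<Sum>l\<in>I. u i \<bullet> u l) = (norm (\<Sum>i\<in>I. u i))\<^sup>2"
    by (simp add: power2_norm_eq_inner)
  moreover have "(\<Sum>i\<in>I. \<Sum>l\<in>I. (norm (u i - u l))\<^sup>2)
      = 2 * real (card I) * (\<Sum>i\<in>I. (norm (u i))\<^sup>2) - 2 * (\<Sum>i\<in>I. \<Sum>l\<in>I. u i \<bullet> u l)"
    by (simp add: power2_norm_diff sum.distrib sum_subtractf sum_distrib_left mult.assoc)
  ultimately show ?thesis by simp
qed

lemma sum_pairwise_norm_diff_sq_le:
  fixes u :: "'i \<Rightarrow> 'a::real_inner"
  assumes "finite I"
  shows "(\<Sum>i\<in>I. \<Sum>l\<in>I. (norm (u i - u l))\<^sup>2) \<le> 2 * real (card I) * (\<Sum>i\<in>I. (norm (u i - c))\<^sup>2)"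
  using sum_pairwise_norm_diff_sq[OF assms, of "\<lambda>i. u i - c"] by simp

lemma sum_norm_diff_mean_sq:
  fixes u :: "'i \<Rightarrow> 'a::real_inner"
  assumes "real (card I) *\<^sub>R c = (\<Sum>i\<in>I. u i)"
  shows "(\<Sum>i\<in>I. (norm (u i - c))\<^sup>2) = (\<Sum>i\<in>I. (norm (u i))\<^sup>2) - real (card I) * (norm c)\<^sup>2"
proof -
  have "(\<Sum>i\<in>I. (norm (u i - c))\<^sup>2)
      = (\<Sum>i\<in>I. (norm (u i))\<^sup>2) - 2 * ((\<Sum>i\<in>I. u i) \<bullet> c) + real (card I) * (norm c)\<^sup>2"
    by (simp add: power2_norm_diff sum.distrib sum_subtractf sum_distrib_left inner_sum_left)
  also have "(\<Sum>i\<in>I. u i) \<bullet> c = real (card I) * (norm c)\<^sup>2"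
    unfolding assms[symmetric] by (simp add: power2_norm_eq_inner)
  finally show ?thesis by simp
qed

lemma ennreal_le_mult_of_divide_le:
  assumes "S / ennreal G \<le> ennreal X" "G > 0" "X \<ge> 0"
  shows "S \<le> ennreal (G * X)"
proof -
  have "S = (S / ennreal G) * ennreal G"
    using assms(2) by (simp add: ennreal_divide_times)
  also have "\<dots> \<le> ennreal X * ennreal G" by (rule mult_right_mono[OF assms(1)]) simp
  finally show ?thesis using assms by (simp add: ennreal_mult mult.commute)
qed

lemma ennreal_mult_add:
  "0 \<le> a \<Longrightarrow> 0 \<le> b \<Longrightarrow> 0 \<le> c \<Longrightarrow> ennreal (a * b + c) = ennreal a * ennreal b + ennreal c"
  by (simp add: ennreal_mult)

lemma stepsize_condition:
  fixes \<gamma> L A :: real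
  assumes "0 < \<gamma>" "\<gamma> \<le> 1 / (L + sqrt A)" "A \<ge> 0" "L \<ge> 0"
  shows "\<gamma>\<^sup>2 * A \<le> 1 - L * \<gamma>"
proof -
  have "L + sqrt A \<noteq> 0"
  proof
    assume "L + sqrt A = 0"
    with assms show False by simp
  qed
  then have "L + sqrt A > 0" using assms by (simp add: order_less_le)
  then have "sqrt A * \<gamma> \<le> 1 - L * \<gamma>"
    using assms(2) by (simp add: le_divide_eq algebra_simps)
  moreover have "0 \<le> sqrt A * \<gamma>" "L * \<gamma> \<ge> 0" using assms by auto
  ultimately have "(sqrt A * \<gamma>) * (sqrt A * \<gamma>) \<le> 1 * (sqrt A * \<gamma>)"
    by (intro mult_right_mono) auto
  moreover have "(sqrt A * \<gamma>) * (sqrt A * \<gamma>) = \<gamma>\<^sup>2 * A"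
    using assms by (simp add: power2_eq_square algebra_simps)
  ultimately show ?thesis using \<open>sqrt A * \<gamma> \<le> 1 - L * \<gamma>\<close> by simp
qed

lemma aggregation_coeff_le:
  fixes \<kappa> p c \<delta> :: real
  assumes "0 \<le> \<kappa>" "\<kappa> \<le> 4 * c * \<delta>" "0 < p" "p \<le> 1"
  shows "(1 + 2/p) * \<kappa> * p \<le> 12 * c * \<delta>" and "(1 + 2/p) * \<kappa> \<le> 12 * c * \<delta> / p"
proof -
  have "(1 + 2/p) * \<kappa> * p = (p + 2) * \<kappa>" using assms by (simp add: field_simps)
  also have "\<dots> \<le> 3 * \<kappa>" using assms by (intro mult_right_mono) auto
  finally show "(1 + 2/p) * \<kappa> * p \<le> 12 * c * \<delta>" using assms by linarith
  then show "(1 + 2/p) * \<kappa> \<le> 12 * c * \<delta> / p" using assms by (simp add: field_simps)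
qed

lemma error_recursion_le:
  fixes e e' d d' r \<kappa> T S p \<gamma> A B L c \<delta> \<zeta> :: real
  assumes V: "e' \<le> (1 + p/2) * (1 - p) * (e + T * \<gamma>\<^sup>2 * r)
                 + (1 + 2/p) * \<kappa> * (p * (B * d' + \<zeta>\<^sup>2) + (1 - p) * (S * \<gamma>\<^sup>2 * r))"
    and D: "d' \<le> 2 * d + 2 * L\<^sup>2 * \<gamma>\<^sup>2 * r"
    and nonneg: "0 \<le> e" "0 \<le> r" "0 \<le> d'" "0 \<le> B" "0 \<le> T" "0 \<le> S" "0 \<le> \<kappa>"
    and \<kappa>: "\<kappa> \<le> 4 * c * \<delta>" and p: "0 < p" "p \<le> 1"
    and A: "3 * (1 - p) * T / p + 24 * c * \<delta> * (1 - p) * S / p\<^sup>2 + 48 * B * L\<^sup>2 * c * \<delta> / p \<le> A"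
  shows "e' \<le> (1 - p/2) * e + p/2 * A * \<gamma>\<^sup>2 * r + 24 * c * \<delta> * B * d + 12 * c * \<delta> * \<zeta>\<^sup>2"
proof -
  define q where "q = \<gamma>\<^sup>2 * r"
  have q: "0 \<le> q" using nonneg by (simp add: q_def)
  have c\<delta>: "0 \<le> c * \<delta>" using nonneg \<kappa> by simp
  have e_term: "(1 + p/2) * (1 - p) * e \<le> (1 - p/2) * e"
    using nonneg p by (intro mult_right_mono) (auto simp: algebra_simps)
  have T_term: "(1 + p/2) * (1 - p) * (T * q) \<le> 3/2 * (1 - p) * (T * q)"
    using nonneg p q by (intro mult_right_mono) auto
  note coeff = aggregation_coeff_le[OF nonneg(7) \<kappa> p]
  have reset_term: "(1 + 2/p) * \<kappa> * p * (B * d' + \<zeta>\<^sup>2) \<le> 12 * c * \<delta> * (B * (2 * d + 2 * L\<^sup>2 * q) + \<zeta>\<^sup>2)"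
  proof (rule mult_mono)
    show "B * d' + \<zeta>\<^sup>2 \<le> B * (2 * d + 2 * L\<^sup>2 * q) + \<zeta>\<^sup>2"
      using D nonneg by (simp add: q_def mult_left_mono mult.assoc)
  qed (use coeff nonneg c\<delta> in \<open>auto simp: mult.commute\<close>)
  have S_term: "(1 + 2/p) * \<kappa> * ((1 - p) * (S * q)) \<le> 12 * c * \<delta> / p * ((1 - p) * (S * q))"
    using coeff p nonneg q by (intro mult_right_mono) auto
  have "3/2 * (1 - p) * (T * q) + 12 * c * \<delta> / p * ((1 - p) * (S * q)) + 24 * c * \<delta> * B * L\<^sup>2 * q
      = p/2 * (3 * (1 - p) * T / p + 24 * c * \<delta> * (1 - p) * S / p\<^sup>2 + 48 * B * L\<^sup>2 * c * \<delta> / p) * q"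
    using p by (simp add: field_simps power2_eq_square)
  also have "\<dots> \<le> p/2 * A * q"
    using A p q by (intro mult_right_mono) auto
  finally have "3/2 * (1 - p) * (T * q) + 12 * c * \<delta> / p * ((1 - p) * (S * q)) + 24 * c * \<delta> * B * L\<^sup>2 * q
      \<le> p/2 * A * q" .
  moreover have "(1 + p/2) * (1 - p) * (e + T * q) + (1 + 2/p) * \<kappa> * (p * (B * d' + \<zeta>\<^sup>2) + (1 - p) * (S * q))
      = (1 + p/2) * (1 - p) * e + (1 + p/2) * (1 - p) * (T * q)
        + (1 + 2/p) * \<kappa> * p * (B * d' + \<zeta>\<^sup>2) + (1 + 2/p) * \<kappa> * ((1 - p) * (S * q))"
    by (simp only: distrib_left mult.assoc)
  moreover have "12 * c * \<delta> * (B * (2 * d + 2 * L\<^sup>2 * q) + \<zeta>\<^sup>2)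
      = 24 * c * \<delta> * B * d + 24 * c * \<delta> * B * L\<^sup>2 * q + 12 * c * \<delta> * \<zeta>\<^sup>2"
    by (simp add: algebra_simps)
  moreover have "e' \<le> (1 + p/2) * (1 - p) * (e + T * q)
      + (1 + 2/p) * \<kappa> * (p * (B * d' + \<zeta>\<^sup>2) + (1 - p) * (S * q))"
    using V by (simp add: q_def mult.assoc)
  ultimately have "e' \<le> (1 - p/2) * e + p/2 * A * q + 24 * c * \<delta> * B * d + 12 * c * \<delta> * \<zeta>\<^sup>2"
    using e_term T_term reset_term S_term by linarith
  then show ?thesis by (simp add: q_def mult.assoc)
qed

lemma lyapunov_step:
  fixes a a' e e' d r p \<gamma> A L c \<delta> B \<zeta> :: real
  assumes descent: "a' + \<gamma>/2 * d + \<gamma>/2 * (1 - L * \<gamma>) * r \<le> a + \<gamma>/2 * e"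
    and error: "e' \<le> (1 - p/2) * e + p/2 * A * \<gamma>\<^sup>2 * r + 24 * c * \<delta> * B * d + 12 * c * \<delta> * \<zeta>\<^sup>2"
    and "0 < p" "0 < \<gamma>" "0 \<le> r" and step: "\<gamma>\<^sup>2 * A \<le> 1 - L * \<gamma>"
  shows "a' + \<gamma>/p * e' + \<gamma>/2 * (1 - 48 * c * \<delta> * B / p) * d \<le> a + \<gamma>/p * e + 12 * \<gamma> * c * \<delta> * \<zeta>\<^sup>2 / p"
proof -
  have "\<gamma>/p * e' \<le> \<gamma>/p * ((1 - p/2) * e + p/2 * A * \<gamma>\<^sup>2 * r + 24 * c * \<delta> * B * d + 12 * c * \<delta> * \<zeta>\<^sup>2)"
    using error assms by (intro mult_left_mono) auto
  also have "\<dots> = \<gamma>/p * e - \<gamma>/2 * e + \<gamma>/2 * (\<gamma>\<^sup>2 * A) * r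
      + \<gamma>/p * (24 * c * \<delta> * B * d) + 12 * \<gamma> * c * \<delta> * \<zeta>\<^sup>2 / p"
    using assms by (simp add: field_simps)
  also have "\<gamma>/2 * (\<gamma>\<^sup>2 * A) * r \<le> \<gamma>/2 * (1 - L * \<gamma>) * r"
    using assms by (intro mult_right_mono mult_left_mono) auto
  finally have "\<gamma>/p * e' \<le> \<gamma>/p * e - \<gamma>/2 * e + \<gamma>/2 * (1 - L * \<gamma>) * r
      + \<gamma>/p * (24 * c * \<delta> * B * d) + 12 * \<gamma> * c * \<delta> * \<zeta>\<^sup>2 / p"
    by simp
  moreover have "\<gamma>/2 * (1 - 48 * c * \<delta> * B / p) * d = \<gamma>/2 * d - \<gamma>/p * (24 * c * \<delta> * B * d)"
    using assms by (simp add: field_simps)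
  ultimately show ?thesis using descent by linarith
qed

lemma average_le_of_telescope:
  fixes \<Phi> d :: "nat \<Rightarrow> real"
  assumes step: "\<And>k. \<Phi> (Suc k) + \<alpha> * d k \<le> \<Phi> k + \<beta>" and nonneg: "\<And>k. \<Phi> k \<ge> 0"
    and "\<alpha> > 0"
  shows "(\<Sum>k<Suc K. d k) / real (Suc K) \<le> \<Phi> 0 / (\<alpha> * real (Suc K)) + \<beta> / \<alpha>"
proof -
  have telescope: "\<Phi> n + \<alpha> * (\<Sum>k<n. d k) \<le> \<Phi> 0 + real n * \<beta>" for n
  proof (induction n)
    case (Suc n)
    then show ?case using step[of n] by (simp add: algebra_simps)
  qed simp
  have "\<alpha> * (\<Sum>k<Suc K. d k) \<le> \<Phi> 0 + real (Suc K) * \<beta>"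
    using telescope[of "Suc K"] nonneg[of "Suc K"] by linarith
  then have "(\<Sum>k<Suc K. d k) \<le> (\<Phi> 0 + real (Suc K) * \<beta>) / \<alpha>"
    using \<open>\<alpha> > 0\<close> by (simp add: field_simps)
  then have "(\<Sum>k<Suc K. d k) / real (Suc K) \<le> (\<Phi> 0 + real (Suc K) * \<beta>) / \<alpha> / real (Suc K)"
    by (intro divide_right_mono) auto
  also have "\<dots> = \<Phi> 0 / (\<alpha> * real (Suc K)) + \<beta> / \<alpha>"
    by (simp add: add_divide_distrib del: of_nat_Suc)
  finally show ?thesis .
qed

section \<open>Second moments of independent perturbations\<close>

lemma nn_integral_centered_sq_le:
  fixes U :: "'b \<Rightarrow> 'a::euclidean_space"
  assumes "prob_space N" and U: "integrable N U" "(\<integral>y. U y \<partial>N) = m"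
  shows "(\<integral>\<^sup>+y. ennreal ((norm (u + a *\<^sub>R (U y - m)))\<^sup>2) \<partial>N)
     \<le> ennreal ((norm u)\<^sup>2) + ennreal (a\<^sup>2) * (\<integral>\<^sup>+y. ennreal ((norm (U y - m))\<^sup>2) \<partial>N)"
proof (cases "(\<integral>\<^sup>+y. ennreal ((norm (U y - m))\<^sup>2) \<partial>N) = \<infinity>")
  case True
  then show ?thesis
    by (cases "a = 0") (simp_all add: prob_space.emeasure_space_1[OF assms(1)] ennreal_mult_top)
next
  case False
  interpret prob_space N by fact
  have [measurable]: "U \<in> borel_measurable N" using U by auto
  have var: "integrable N (\<lambda>y. (norm (U y - m))\<^sup>2)"
    by (rule integrableI_nonneg) (use False in \<open>auto simp: top.not_eq_extremum\<close>)
  have cross: "integrable N (\<lambda>y. u \<bullet> (U y - m))" "(\<integral>y. u \<bullet> (U y - m) \<partial>N) = 0"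
    using U by (auto simp: prob_space)
  have expand: "(norm (u + a *\<^sub>R (U y - m)))\<^sup>2
      = (norm u)\<^sup>2 + 2 * a * (u \<bullet> (U y - m)) + a\<^sup>2 * (norm (U y - m))\<^sup>2" for y
    by (simp add: power2_norm_add power_mult_distrib)
  have "(\<integral>\<^sup>+y. ennreal ((norm (u + a *\<^sub>R (U y - m)))\<^sup>2) \<partial>N)
      = ennreal (\<integral>y. (norm u)\<^sup>2 + 2 * a * (u \<bullet> (U y - m)) + a\<^sup>2 * (norm (U y - m))\<^sup>2 \<partial>N)"
  proof -
    have "integrable N (\<lambda>y. (norm u)\<^sup>2 + 2 * a * (u \<bullet> (U y - m)) + a\<^sup>2 * (norm (U y - m))\<^sup>2)"
      using var cross by auto
    then show ?thesis
      unfolding expand by (rule nn_integral_eq_integral) (simp add: expand[symmetric])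
  qed
  also have "\<dots> = ennreal ((norm u)\<^sup>2 + a\<^sup>2 * (\<integral>y. (norm (U y - m))\<^sup>2 \<partial>N))"
    using var cross by (simp add: prob_space)
  also have "\<dots> = ennreal ((norm u)\<^sup>2) + ennreal (a\<^sup>2) * ennreal (\<integral>y. (norm (U y - m))\<^sup>2 \<partial>N)"
    by (subst ennreal_plus) (auto intro!: integral_nonneg_AE simp: ennreal_mult)
  also have "ennreal (\<integral>y. (norm (U y - m))\<^sup>2 \<partial>N) = (\<integral>\<^sup>+y. ennreal ((norm (U y - m))\<^sup>2) \<partial>N)"
    by (rule nn_integral_eq_integral[OF var, symmetric]) simp
  finally show ?thesis by simp
qed

lemma product_nn_integral_centered_sum_sq_le:
  fixes U :: "'i \<Rightarrow> 'b \<Rightarrow> 'a::euclidean_space" and MM :: "'i \<Rightarrow> 'b measure"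
  assumes "finite I" and prob: "\<And>i. prob_space (MM i)"
    and U: "\<And>i. i \<in> I \<Longrightarrow> integrable (MM i) (U i)" "\<And>i. i \<in> I \<Longrightarrow> (\<integral>y. U i y \<partial>MM i) = m i"
  shows "(\<integral>\<^sup>+\<omega>. ennreal ((norm (w + (\<Sum>i\<in>I. a i *\<^sub>R (U i (\<omega> i) - m i))))\<^sup>2) \<partial>PiM I MM)
     \<le> ennreal ((norm w)\<^sup>2) + (\<Sum>i\<in>I. ennreal ((a i)\<^sup>2) * (\<integral>\<^sup>+y. ennreal ((norm (U i y - m i))\<^sup>2) \<partial>MM i))"
  using assms(1) U
proof (induction I arbitrary: w rule: finite_induct)
  case empty
  interpret prob_space "PiM {} MM" by (rule prob_space_PiM) (use prob in auto)
  show ?case by (simp add: emeasure_space_1)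
next
  case (insert j I)
  interpret product_sigma_finite MM
    unfolding product_sigma_finite_def using prob by (auto intro: prob_space_imp_sigma_finite)
  interpret PI: prob_space "PiM I MM" by (rule prob_space_PiM) (use prob in auto)
  have [measurable]: "\<And>i. i \<in> insert j I \<Longrightarrow> U i \<in> borel_measurable (MM i)"
    using insert.prems by auto
  let ?S = "\<lambda>\<omega>. w + (\<Sum>i\<in>I. a i *\<^sub>R (U i (\<omega> i) - m i))"
  let ?V = "\<lambda>i. ennreal ((a i)\<^sup>2) * (\<integral>\<^sup>+y. ennreal ((norm (U i y - m i))\<^sup>2) \<partial>MM i)"
  have split: "w + (\<Sum>i\<in>insert j I. a i *\<^sub>R (U i (fun_upd \<omega> j y i) - m i)) = ?S \<omega> + a j *\<^sub>R (U j y - m j)"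
    for \<omega> y
  proof -
    have "(\<Sum>i\<in>I. a i *\<^sub>R (U i (fun_upd \<omega> j y i) - m i)) = (\<Sum>i\<in>I. a i *\<^sub>R (U i (\<omega> i) - m i))"
      using insert.hyps by (intro sum.cong) auto
    then show ?thesis using insert.hyps by (simp add: algebra_simps)
  qed
  have "(\<integral>\<^sup>+\<omega>. ennreal ((norm (w + (\<Sum>i\<in>insert j I. a i *\<^sub>R (U i (\<omega> i) - m i))))\<^sup>2) \<partial>PiM (insert j I) MM)
     = (\<integral>\<^sup>+\<omega>. \<integral>\<^sup>+y. ennreal ((norm (?S \<omega> + a j *\<^sub>R (U j y - m j)))\<^sup>2) \<partial>MM j \<partial>PiM I MM)"
    unfolding split[symmetric] by (rule product_nn_integral_insert[OF insert.hyps]) measurable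
  also have "\<dots> \<le> (\<integral>\<^sup>+\<omega>. ennreal ((norm (?S \<omega>))\<^sup>2) + ?V j \<partial>PiM I MM)"
    by (intro nn_integral_mono nn_integral_centered_sq_le prob) (use insert.prems in auto)
  also have "\<dots> = (\<integral>\<^sup>+\<omega>. ennreal ((norm (?S \<omega>))\<^sup>2) \<partial>PiM I MM) + ?V j"
    by (subst nn_integral_add) (auto simp: PI.emeasure_space_1)
  also have "\<dots> \<le> ennreal ((norm w)\<^sup>2) + (\<Sum>i\<in>I. ?V i) + ?V j"
    by (intro add_right_mono insert.IH) (use insert.prems in auto)
  finally show ?case using insert.hyps by (simp add: ac_simps)
qed

lemma nn_integral_PiM_centered_sum_sq_le:
  fixes U :: "'i \<Rightarrow> 'b \<Rightarrow> 'a::euclidean_space" and MM :: "'i \<Rightarrow> 'b measure"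
  assumes "finite I" and prob: "\<And>i. i \<in> I \<Longrightarrow> prob_space (MM i)"
    and U: "\<And>i. i \<in> I \<Longrightarrow> integrable (MM i) (U i)" "\<And>i. i \<in> I \<Longrightarrow> (\<integral>y. U i y \<partial>MM i) = m i"
  shows "(\<integral>\<^sup>+\<omega>. ennreal ((norm (w + (\<Sum>i\<in>I. a i *\<^sub>R (U i (\<omega> i) - m i))))\<^sup>2) \<partial>PiM I MM)
     \<le> ennreal ((norm w)\<^sup>2) + (\<Sum>i\<in>I. ennreal ((a i)\<^sup>2) * (\<integral>\<^sup>+y. ennreal ((norm (U i y - m i))\<^sup>2) \<partial>MM i))"
proof -
  \<comment> \<open>Outside \<open>I\<close> the factors are irrelevant; replace them by probability measures.\<close>
  let ?MM = "\<lambda>i. if i \<in> I then MM i else return (count_space UNIV) undefined"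
  have "PiM I MM = PiM I ?MM" by (rule PiM_cong) auto
  moreover have "(\<Sum>i\<in>I. ennreal ((a i)\<^sup>2) * (\<integral>\<^sup>+y. ennreal ((norm (U i y - m i))\<^sup>2) \<partial>?MM i))
     = (\<Sum>i\<in>I. ennreal ((a i)\<^sup>2) * (\<integral>\<^sup>+y. ennreal ((norm (U i y - m i))\<^sup>2) \<partial>MM i))"
    by (rule sum.cong) auto
  moreover have "(\<integral>\<^sup>+\<omega>. ennreal ((norm (w + (\<Sum>i\<in>I. a i *\<^sub>R (U i (\<omega> i) - m i))))\<^sup>2) \<partial>PiM I ?MM)
     \<le> ennreal ((norm w)\<^sup>2) + (\<Sum>i\<in>I. ennreal ((a i)\<^sup>2) * (\<integral>\<^sup>+y. ennreal ((norm (U i y - m i))\<^sup>2) \<partial>?MM i))"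
    by (rule product_nn_integral_centered_sum_sq_le[OF assms(1)])
      (auto simp: prob U intro: prob_space_return)
  ultimately show ?thesis by simp
qed

lemma nn_integral_PiM_component_sq_le:
  fixes D :: "'i \<Rightarrow> 'e \<Rightarrow> 'a::euclidean_space"
  assumes "finite I" "j \<in> I" and prob: "\<And>i. i \<in> I \<Longrightarrow> prob_space (ND i)"
    and D: "\<And>i. i \<in> I \<Longrightarrow> integrable (ND i) (D i)" "\<And>i. i \<in> I \<Longrightarrow> (\<integral>e. D i e \<partial>ND i) = \<Delta> i"
  shows "(\<integral>\<^sup>+\<xi>. ennreal ((norm (D j (\<xi> j)))\<^sup>2) \<partial>PiM I ND)
     \<le> ennreal ((norm (\<Delta> j))\<^sup>2) + (\<integral>\<^sup>+e. ennreal ((norm (D j e - \<Delta> j))\<^sup>2) \<partial>ND j)"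
proof -
  define a where "a i = (if i = j then 1 else 0 :: real)" for i
  have "D j (\<xi> j) = \<Delta> j + (\<Sum>i\<in>I. a i *\<^sub>R (D i (\<xi> i) - \<Delta> i))" for \<xi>
    using assms(1,2) by (simp add: a_def if_distrib[of "\<lambda>t. t *\<^sub>R _"] cong: if_cong)
  moreover have "(\<integral>\<^sup>+\<xi>. ennreal ((norm (\<Delta> j + (\<Sum>i\<in>I. a i *\<^sub>R (D i (\<xi> i) - \<Delta> i))))\<^sup>2) \<partial>PiM I ND)
      \<le> ennreal ((norm (\<Delta> j))\<^sup>2) + (\<Sum>i\<in>I. ennreal ((a i)\<^sup>2) * (\<integral>\<^sup>+e. ennreal ((norm (D i e - \<Delta> i))\<^sup>2) \<partial>ND i))"
    by (rule nn_integral_PiM_centered_sum_sq_le) (use assms in auto)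
  moreover have "(\<Sum>i\<in>I. ennreal ((a i)\<^sup>2) * (\<integral>\<^sup>+e. ennreal ((norm (D i e - \<Delta> i))\<^sup>2) \<partial>ND i))
      = (\<integral>\<^sup>+e. ennreal ((norm (D j e - \<Delta> j))\<^sup>2) \<partial>ND j)"
    using assms(1,2) by (simp add: a_def if_distrib[of "\<lambda>t. ennreal (t\<^sup>2) * _"] cong: if_cong)
  ultimately show ?thesis by simp
qed


lemma nn_integral_compressor_sum_sq_le:
  fixes Q :: "'a::euclidean_space \<Rightarrow> 'r \<Rightarrow> 'a"
  assumes "finite I" "prob_space NQ" and Q: "\<And>y. integrable NQ (Q y)" "\<And>y. (\<integral>r. Q y r \<partial>NQ) = y"
    and var_Q: "\<And>y. (\<integral>\<^sup>+ r. ennreal ((norm (Q y r - y))\<^sup>2) \<partial>NQ) \<le> ennreal (\<omega> * (norm y)\<^sup>2)"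
  shows "(\<integral>\<^sup>+\<eta>. ennreal ((norm (w + (\<Sum>i\<in>I. a i *\<^sub>R (Q (v i) (\<eta> i) - v i))))\<^sup>2) \<partial>PiM I (\<lambda>_. NQ))
     \<le> ennreal ((norm w)\<^sup>2) + (\<Sum>i\<in>I. ennreal ((a i)\<^sup>2) * ennreal (\<omega> * (norm (v i))\<^sup>2))"
proof -
  have "(\<integral>\<^sup>+\<eta>. ennreal ((norm (w + (\<Sum>i\<in>I. a i *\<^sub>R (Q (v i) (\<eta> i) - v i))))\<^sup>2) \<partial>PiM I (\<lambda>_. NQ))
     \<le> ennreal ((norm w)\<^sup>2) + (\<Sum>i\<in>I. ennreal ((a i)\<^sup>2) * (\<integral>\<^sup>+r. ennreal ((norm (Q (v i) r - v i))\<^sup>2) \<partial>NQ))"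
    by (rule nn_integral_PiM_centered_sum_sq_le) (use assms in auto)
  also have "\<dots> \<le> ennreal ((norm w)\<^sup>2) + (\<Sum>i\<in>I. ennreal ((a i)\<^sup>2) * ennreal (\<omega> * (norm (v i))\<^sup>2))"
    by (intro add_left_mono sum_mono mult_left_mono var_Q) auto
  finally show ?thesis .
qed

lemma nn_integral_compressed_sum_sq_le:
  fixes D :: "'i \<Rightarrow> 'e \<Rightarrow> 'a::euclidean_space" and Q :: "'a \<Rightarrow> 'r \<Rightarrow> 'a"
  assumes I: "finite I" and prob: "\<And>i. i \<in> I \<Longrightarrow> prob_space (ND i)" "prob_space NQ"
    and D: "\<And>i. i \<in> I \<Longrightarrow> integrable (ND i) (D i)" "\<And>i. i \<in> I \<Longrightarrow> (\<integral>e. D i e \<partial>ND i) = \<Delta> i"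
    and Q_measurable: "(\<lambda>(y, r). Q y r) \<in> borel \<Otimes>\<^sub>M NQ \<rightarrow>\<^sub>M borel"
    and Q: "\<And>y. integrable NQ (Q y)" "\<And>y. (\<integral>r. Q y r \<partial>NQ) = y"
    and var_Q: "\<And>y. (\<integral>\<^sup>+ r. ennreal ((norm (Q y r - y))\<^sup>2) \<partial>NQ) \<le> ennreal (\<omega> * (norm y)\<^sup>2)"
    and "\<omega> \<ge> 0"
  shows "(\<integral>\<^sup>+ \<xi>\<eta>. ennreal ((norm (w + (\<Sum>i\<in>I. a i *\<^sub>R (Q (D i (fst \<xi>\<eta> i)) (snd \<xi>\<eta> i) - \<Delta> i))))\<^sup>2)
            \<partial>(PiM I ND \<Otimes>\<^sub>M PiM I (\<lambda>_. NQ)))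
     \<le> ennreal ((norm w)\<^sup>2) + (\<Sum>i\<in>I. ennreal ((a i)\<^sup>2) *
           (ennreal (1 + \<omega>) * (\<integral>\<^sup>+e. ennreal ((norm (D i e - \<Delta> i))\<^sup>2) \<partial>ND i) + ennreal (\<omega> * (norm (\<Delta> i))\<^sup>2)))"
proof -
  interpret PQ: prob_space "PiM I (\<lambda>_. NQ)" by (rule prob_space_PiM) (use prob in auto)
  have [measurable]: "\<And>i. i \<in> I \<Longrightarrow> D i \<in> borel_measurable (ND i)" using D by auto
  note Q_measurable[measurable]
  let ?V = "\<lambda>i. (\<integral>\<^sup>+e. ennreal ((norm (D i e - \<Delta> i))\<^sup>2) \<partial>ND i)"
  let ?w = "\<lambda>\<xi>. w + (\<Sum>i\<in>I. a i *\<^sub>R (D i (\<xi> i) - \<Delta> i))"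
  let ?E = "\<lambda>i. \<integral>\<^sup>+ \<xi>. ennreal ((norm (D i (\<xi> i)))\<^sup>2) \<partial>PiM I ND"
  have "(\<integral>\<^sup>+ \<xi>\<eta>. ennreal ((norm (w + (\<Sum>i\<in>I. a i *\<^sub>R (Q (D i (fst \<xi>\<eta> i)) (snd \<xi>\<eta> i) - \<Delta> i))))\<^sup>2)
            \<partial>(PiM I ND \<Otimes>\<^sub>M PiM I (\<lambda>_. NQ)))
     = (\<integral>\<^sup>+ \<xi>. \<integral>\<^sup>+ \<eta>. ennreal ((norm (?w \<xi> + (\<Sum>i\<in>I. a i *\<^sub>R (Q (D i (\<xi> i)) (\<eta> i) - D i (\<xi> i)))))\<^sup>2)
            \<partial>PiM I (\<lambda>_. NQ) \<partial>PiM I ND)"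
    by (subst PQ.nn_integral_fst[symmetric]) (measurable,
        simp add: algebra_simps sum.distrib scaleR_diff_right sum_subtractf)
  also have "\<dots> \<le> (\<integral>\<^sup>+ \<xi>. ennreal ((norm (?w \<xi>))\<^sup>2)
      + (\<Sum>i\<in>I. ennreal ((a i)\<^sup>2) * ennreal \<omega> * ennreal ((norm (D i (\<xi> i)))\<^sup>2)) \<partial>PiM I ND)"
    using nn_integral_compressor_sum_sq_le[OF I prob(2) Q var_Q] \<open>\<omega> \<ge> 0\<close>
    by (intro nn_integral_mono) (simp add: ennreal_mult mult.assoc)
  also have "\<dots> = (\<integral>\<^sup>+ \<xi>. ennreal ((norm (?w \<xi>))\<^sup>2) \<partial>PiM I ND)
      + (\<Sum>i\<in>I. ennreal ((a i)\<^sup>2) * ennreal \<omega> * ?E i)"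
    by (simp add: nn_integral_add nn_integral_sum nn_integral_cmult)
  also have "\<dots> \<le> (ennreal ((norm w)\<^sup>2) + (\<Sum>i\<in>I. ennreal ((a i)\<^sup>2) * ?V i))
      + (\<Sum>i\<in>I. ennreal ((a i)\<^sup>2) * ennreal \<omega> * (ennreal ((norm (\<Delta> i))\<^sup>2) + ?V i))"
    by (intro add_mono sum_mono mult_left_mono nn_integral_PiM_centered_sum_sq_le
        nn_integral_PiM_component_sq_le) (use I prob D in auto)
  also have "\<dots> = ennreal ((norm w)\<^sup>2) + (\<Sum>i\<in>I. ennreal ((a i)\<^sup>2) *
           (ennreal (1 + \<omega>) * ?V i + ennreal (\<omega> * (norm (\<Delta> i))\<^sup>2)))"
    using \<open>\<omega> \<ge> 0\<close>
    by (simp add: add.assoc sum.distrib[symmetric] ennreal_plus ennreal_mult algebra_simps)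
  finally show ?thesis .
qed

section \<open>Bernoulli resets and fresh randomness\<close>

lemma integrable_nonneg_le:
  fixes u v :: "'a \<Rightarrow> real"
  assumes "integrable M v" "u \<in> borel_measurable M" "\<And>x. 0 \<le> u x" "\<And>x. u x \<le> v x"
  shows "integrable M u"
  using assms by (intro Bochner_Integration.integrable_bound[OF assms(1,2)] AE_I2)
    (auto intro: order_trans[OF _ abs_ge_self])

lemma nn_integral_ennreal_cmult:
  assumes "0 \<le> c" "\<And>x. 0 \<le> f x" "f \<in> borel_measurable M"
  shows "(\<integral>\<^sup>+x. ennreal (c * f x) \<partial>M) = ennreal c * (\<integral>\<^sup>+x. ennreal (f x) \<partial>M)"
  using assms by (simp add: ennreal_mult nn_integral_cmult)

lemma nn_integral_bernoulli_pair:
  fixes h :: "bool \<times> 'b \<Rightarrow> ennreal"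
  assumes "0 \<le> p" "p \<le> 1" "prob_space N"
    and h: "h \<in> borel_measurable (measure_pmf (bernoulli_pmf p) \<Otimes>\<^sub>M N)"
  shows "(\<integral>\<^sup>+w. h w \<partial>(measure_pmf (bernoulli_pmf p) \<Otimes>\<^sub>M N))
     = ennreal p * (\<integral>\<^sup>+y. h (True, y) \<partial>N) + ennreal (1 - p) * (\<integral>\<^sup>+y. h (False, y) \<partial>N)"
proof -
  interpret prob_space N by fact
  have "(\<integral>\<^sup>+w. h w \<partial>(measure_pmf (bernoulli_pmf p) \<Otimes>\<^sub>M N))
      = (\<integral>\<^sup>+c. \<integral>\<^sup>+y. h (c, y) \<partial>N \<partial>measure_pmf (bernoulli_pmf p))"
    by (rule nn_integral_fst[OF h, symmetric])
  then show ?thesis using assms by (simp add: mult.commute)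
qed

lemma nn_integral_pmf_of_set_interval:
  fixes a :: "nat \<Rightarrow> real"
  assumes nonneg: "\<And>k. 0 \<le> a k"
  shows "(\<integral>\<^sup>+k. ennreal (a k) \<partial>measure_pmf (pmf_of_set {0..K})) = ennreal ((\<Sum>k<Suc K. a k) / real (Suc K))"
proof -
  have "(\<integral>\<^sup>+k. ennreal (a k) \<partial>measure_pmf (pmf_of_set {0..K}))
      = (\<Sum>k\<in>{0..K}. ennreal (a k)) / of_nat (card {0..K})"
    by (rule nn_integral_pmf_of_set) auto
  moreover have "{0..K} = {..<Suc K}" by auto
  then have "(\<Sum>k\<in>{0..K}. ennreal (a k)) = ennreal (\<Sum>k<Suc K. a k)"
    using nonneg by (simp only: sum_ennreal)
  moreover have "of_nat (card {0..K}) = ennreal (real (Suc K))"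
    by (simp add: ennreal_of_nat_eq_real_of_nat del: of_nat_Suc)
  ultimately show ?thesis
    by (simp only:) (rule divide_ennreal, simp_all add: sum_nonneg nonneg del: of_nat_Suc)
qed

lemma distr_pair_indep:
  assumes "prob_space M" and sub: "subalgebra M \<F>" and "prob_space P"
    and X: "X \<in> \<F> \<rightarrow>\<^sub>M SX" and W: "W \<in> M \<rightarrow>\<^sub>M P"
    and indep: "\<And>A S. A \<in> sets \<F> \<Longrightarrow> S \<in> sets P \<Longrightarrow>
        measure M (A \<inter> {\<omega> \<in> space M. W \<omega> \<in> S}) = measure M A * measure P S"
  shows "distr M SX X \<Otimes>\<^sub>M P = distr M (SX \<Otimes>\<^sub>M P) (\<lambda>\<omega>. (X \<omega>, W \<omega>))"
proof (rule pair_measure_eqI)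
  interpret M: prob_space M by fact
  interpret P: prob_space P by fact
  have XM: "X \<in> M \<rightarrow>\<^sub>M SX" by (rule measurable_from_subalg[OF sub X])
  show "sigma_finite_measure (distr M SX X)"
    by (rule prob_space_imp_sigma_finite[OF M.prob_space_distr[OF XM]])
  show "sigma_finite_measure P" by (rule prob_space_imp_sigma_finite) fact
  show "sets (distr M SX X \<Otimes>\<^sub>M P) = sets (distr M (SX \<Otimes>\<^sub>M P) (\<lambda>\<omega>. (X \<omega>, W \<omega>)))"
    by (metis sets_distr sets_pair_measure_cong)
  fix A B assume A: "A \<in> sets (distr M SX X)" and B: "B \<in> sets P"
  have "X -` A \<inter> space M \<in> sets \<F>"
    using measurable_sets[OF X] A sub by (simp add: subalgebra_def)
  moreover have "(\<lambda>\<omega>. (X \<omega>, W \<omega>)) -` (A \<times> B) \<inter> space M = (X -` A \<inter> space M) \<inter> {\<omega> \<in> space M. W \<omega> \<in> B}"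
    by auto
  moreover have "(\<lambda>\<omega>. (X \<omega>, W \<omega>)) \<in> M \<rightarrow>\<^sub>M SX \<Otimes>\<^sub>M P" using XM W by (rule measurable_Pair)
  ultimately show "emeasure (distr M SX X) A * emeasure P B
      = emeasure (distr M (SX \<Otimes>\<^sub>M P) (\<lambda>\<omega>. (X \<omega>, W \<omega>))) (A \<times> B)"
    using A B XM indep
    by (simp add: emeasure_distr M.emeasure_eq_measure P.emeasure_eq_measure ennreal_mult)
qed

lemma nn_integral_indep_pair:
  fixes h :: "'x \<times> 'v \<Rightarrow> ennreal"
  assumes "prob_space M" and sub: "subalgebra M \<F>" and "prob_space P"
    and X: "X \<in> \<F> \<rightarrow>\<^sub>M SX" and W: "W \<in> M \<rightarrow>\<^sub>M P"
    and indep: "\<And>A S. A \<in> sets \<F> \<Longrightarrow> S \<in> sets P \<Longrightarrow>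
        measure M (A \<inter> {\<omega> \<in> space M. W \<omega> \<in> S}) = measure M A * measure P S"
    and h: "h \<in> borel_measurable (SX \<Otimes>\<^sub>M P)"
  shows "(\<integral>\<^sup>+\<omega>. h (X \<omega>, W \<omega>) \<partial>M) = (\<integral>\<^sup>+\<omega>. \<integral>\<^sup>+w. h (X \<omega>, w) \<partial>P \<partial>M)"
proof -
  interpret P: prob_space P by fact
  have XM: "X \<in> M \<rightarrow>\<^sub>M SX" by (rule measurable_from_subalg[OF sub X])
  have "(\<integral>\<^sup>+\<omega>. h (X \<omega>, W \<omega>) \<partial>M) = (\<integral>\<^sup>+z. h z \<partial>(distr M SX X \<Otimes>\<^sub>M P))"
    using h XM W by (simp add: distr_pair_indep[OF assms(1-6)] nn_integral_distr)
  also have "\<dots> = (\<integral>\<^sup>+x. \<integral>\<^sup>+w. h (x, w) \<partial>P \<partial>distr M SX X)"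
    using h by (intro P.nn_integral_fst[symmetric])
      (simp add: measurable_cong_sets[OF sets_pair_measure_cong[OF sets_distr refl] refl])
  also have "\<dots> = (\<integral>\<^sup>+\<omega>. \<integral>\<^sup>+w. h (X \<omega>, w) \<partial>P \<partial>M)"
    using h XM by (intro nn_integral_distr) (auto intro: P.borel_measurable_nn_integral_fst)
  finally show ?thesis .
qed

section \<open>Smooth objectives\<close>

lemma gderiv_along_line:
  fixes F :: "'a::real_inner \<Rightarrow> real"
  assumes "GDERIV F (x + t *\<^sub>R d) :> DF"
  shows "((\<lambda>s. F (x + s *\<^sub>R d)) has_real_derivative (d \<bullet> DF)) (at t)"
proof -
  have "((\<lambda>s. x + s *\<^sub>R d) has_derivative (\<lambda>s. s *\<^sub>R d)) (at t)"
    by (auto intro!: derivative_eq_intros)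
  from has_derivative_compose[OF this assms[unfolded gderiv_def]]
  have "((\<lambda>s. F (x + s *\<^sub>R d)) has_derivative (\<lambda>s. (s *\<^sub>R d) \<bullet> DF)) (at t)" .
  moreover have "(\<lambda>s. (s *\<^sub>R d) \<bullet> DF) = (\<lambda>s. (d \<bullet> DF) * s)" by (simp add: fun_eq_iff)
  ultimately show ?thesis by (simp add: has_field_derivative_def)
qed

lemma gderiv_continuous_on:
  fixes F :: "'a::real_inner \<Rightarrow> real"
  assumes "\<And>y. GDERIV F y :> DF y"
  shows "continuous_on UNIV F"
  using assms unfolding gderiv_def
  by (meson continuous_at_imp_continuous_on has_derivative_continuous)

text \<open>Each coordinate of the gradient is a pointwise limit of measurable difference quotients.\<close>

lemma gderiv_borel_measurable:
  fixes F :: "'a::euclidean_space \<Rightarrow> real"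
  assumes D: "\<And>y. GDERIV F y :> DF y"
  shows "DF \<in> borel_measurable borel"
proof (rule borel_measurable_euclidean_space[THEN iffD2], rule ballI)
  fix b :: 'a assume b: "b \<in> Basis"
  have [measurable]: "F \<in> borel_measurable borel"
    by (rule borel_measurable_continuous_onI[OF gderiv_continuous_on[OF D]])
  show "(\<lambda>y. DF y \<bullet> b) \<in> borel_measurable borel"
  proof (rule borel_measurable_LIMSEQ_real)
    fix y :: 'a
    have "((\<lambda>s. F (y + s *\<^sub>R b)) has_real_derivative (b \<bullet> DF y)) (at 0)"
      by (rule gderiv_along_line) (use D in simp)
    then have "(\<lambda>h. (F (y + h *\<^sub>R b) - F y) / h) \<midarrow>0\<rightarrow> b \<bullet> DF y"
      unfolding DERIV_def by simp
    moreover have "filterlim (\<lambda>n. inverse (real (Suc n))) (at 0) sequentially"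
      unfolding filterlim_at using LIMSEQ_inverse_real_of_nat by simp
    ultimately have "(\<lambda>n. (F (y + inverse (real (Suc n)) *\<^sub>R b) - F y) / inverse (real (Suc n)))
        \<longlonglongrightarrow> b \<bullet> DF y"
      by (rule filterlim_compose)
    then show "(\<lambda>n. (F (y + inverse (real (Suc n)) *\<^sub>R b) - F y) * real (Suc n)) \<longlonglongrightarrow> DF y \<bullet> b"
      by (simp add: divide_inverse inner_commute)
  qed measurable
qed

lemma gderiv_lipschitz_upper_bound:
  fixes F :: "'a::real_inner \<Rightarrow> real"
  assumes D: "\<And>y. GDERIV F y :> DF y" and Lip: "\<And>y z. norm (DF y - DF z) \<le> L * norm (y - z)"
  shows "F y \<le> F x + DF x \<bullet> (y - x) + L / 2 * (norm (y - x))\<^sup>2"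
proof -
  define d where "d = y - x"
  define h where "h t = F (x + t *\<^sub>R d) - t * (DF x \<bullet> d) - L / 2 * t\<^sup>2 * (norm d)\<^sup>2" for t
  have "h 1 \<le> h 0"
  proof (rule DERIV_nonpos_imp_nonincreasing[of 0 1])
    fix t :: real assume t: "0 \<le> t" "t \<le> 1"
    have "(h has_real_derivative (d \<bullet> DF (x + t *\<^sub>R d) - DF x \<bullet> d - L * t * (norm d)\<^sup>2)) (at t)"
      unfolding h_def using gderiv_along_line[OF D]
      by (auto intro!: derivative_eq_intros)
    moreover have "d \<bullet> DF (x + t *\<^sub>R d) - DF x \<bullet> d \<le> L * t * (norm d)\<^sup>2"
    proof -
      have "d \<bullet> DF (x + t *\<^sub>R d) - DF x \<bullet> d = d \<bullet> (DF (x + t *\<^sub>R d) - DF x)"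
        by (simp add: inner_diff_right inner_commute[of d])
      also have "\<dots> \<le> norm d * norm (DF (x + t *\<^sub>R d) - DF x)"
        by (rule norm_cauchy_schwarz)
      also have "\<dots> \<le> norm d * (L * norm (t *\<^sub>R d))"
        using Lip[of "x + t *\<^sub>R d" x] by (intro mult_left_mono) auto
      also have "\<dots> = L * t * (norm d)\<^sup>2"
        using t by (simp add: power2_eq_square)
      finally show ?thesis .
    qed
    ultimately show "\<exists>y. (h has_real_derivative y) (at t) \<and> y \<le> 0" by force
  qed simp
  then show ?thesis unfolding h_def d_def by simp
qed

lemma gderiv_loc_f:
  fixes fij :: "nat \<Rightarrow> nat \<Rightarrow> 'a::real_inner \<Rightarrow> real"
  assumes "\<And>j y. j < m \<Longrightarrow> GDERIV (fij i j) y :> dfij i j y"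
  shows "GDERIV (loc_f m fij i) y :> loc_grad m dfij i y"
proof -
  have "((\<lambda>y. \<Sum>j<m. fij i j y) has_derivative (\<lambda>h. \<Sum>j<m. h \<bullet> dfij i j y)) (at y)"
    by (rule has_derivative_sum) (use assms in \<open>auto simp: gderiv_def\<close>)
  then have "((\<lambda>y. (1 / real m) * (\<Sum>j<m. fij i j y))
      has_derivative (\<lambda>h. (1 / real m) * (\<Sum>j<m. h \<bullet> dfij i j y))) (at y)"
    by (rule has_derivative_mult_right)
  moreover have "loc_f m fij i = (\<lambda>y. (1 / real m) * (\<Sum>j<m. fij i j y))"
    by (simp add: fun_eq_iff loc_f_def)
  moreover have "(\<lambda>h. (1 / real m) * (\<Sum>j<m. h \<bullet> dfij i j y)) = (\<lambda>h. h \<bullet> loc_grad m dfij i y)"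
    by (simp add: fun_eq_iff loc_grad_def inner_sum_right)
  ultimately show ?thesis unfolding gderiv_def by simp
qed

lemma gderiv_glob_f:
  fixes fij :: "nat \<Rightarrow> nat \<Rightarrow> 'a::real_inner \<Rightarrow> real"
  assumes "\<And>i j y. i \<in> Gs \<Longrightarrow> j < m \<Longrightarrow> GDERIV (fij i j) y :> dfij i j y"
  shows "GDERIV (glob_f Gs m fij) y :> glob_grad Gs m dfij y"
proof -
  have "((\<lambda>y. \<Sum>i\<in>Gs. loc_f m fij i y) has_derivative (\<lambda>h. \<Sum>i\<in>Gs. h \<bullet> loc_grad m dfij i y)) (at y)"
  proof (rule has_derivative_sum)
    fix i assume "i \<in> Gs"
    have "GDERIV (loc_f m fij i) y :> loc_grad m dfij i y"
      by (rule gderiv_loc_f) (rule assms[OF \<open>i \<in> Gs\<close>])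
    then show "(loc_f m fij i has_derivative (\<lambda>h. h \<bullet> loc_grad m dfij i y)) (at y)"
      by (simp add: gderiv_def)
  qed
  then have "((\<lambda>y. (1 / real (card Gs)) * (\<Sum>i\<in>Gs. loc_f m fij i y))
      has_derivative (\<lambda>h. (1 / real (card Gs)) * (\<Sum>i\<in>Gs. h \<bullet> loc_grad m dfij i y))) (at y)"
    by (rule has_derivative_mult_right)
  moreover have "glob_f Gs m fij = (\<lambda>y. (1 / real (card Gs)) * (\<Sum>i\<in>Gs. loc_f m fij i y))"
    by (simp add: fun_eq_iff glob_f_def)
  moreover have "(\<lambda>h. (1 / real (card Gs)) * (\<Sum>i\<in>Gs. h \<bullet> loc_grad m dfij i y))
      = (\<lambda>h. h \<bullet> glob_grad Gs m dfij y)"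
    by (simp add: fun_eq_iff glob_grad_def inner_sum_right)
  ultimately show ?thesis unfolding gderiv_def by simp
qed

section \<open>One round of the algorithm\<close>

text \<open>The message of good worker \<open>i\<close> in a step from \<open>x\<close> to \<open>y\<close> with previous estimator \<open>g\<close>;
  the sample \<open>w = (c, \<xi>, \<eta>)\<close> collects the coin \<open>c\<^sub>k\<close>, the seeds \<open>\<xi>\<^sub>i\<close> of the estimators
  \<open>\<Delta>\<^sub>i\<close> and the seeds \<open>\<eta>\<^sub>i\<close> of the compressions.\<close>

definition worker_msg :: "(nat \<Rightarrow> 'a \<Rightarrow> 'a) \<Rightarrow> ('a \<Rightarrow> 'r \<Rightarrow> 'a) \<Rightarrow> (nat \<Rightarrow> 'a \<Rightarrow> 'a \<Rightarrow> 'e \<Rightarrow> 'a)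
    \<Rightarrow> nat \<Rightarrow> 'a \<Rightarrow> 'a \<Rightarrow> 'a::real_vector \<Rightarrow> bool \<times> (nat \<Rightarrow> 'e) \<times> (nat \<Rightarrow> 'r) \<Rightarrow> 'a" where
  "worker_msg gfi Q Dh i y x g w =
     (if fst w then gfi i y else g + Q (Dh i y x (fst (snd w) i)) (snd (snd w) i))"

locale marina_round =
  fixes Gs :: "nat set" and gfi :: "nat \<Rightarrow> 'a::euclidean_space \<Rightarrow> 'a" and gf :: "'a \<Rightarrow> 'a"
    and Dh :: "nat \<Rightarrow> 'a \<Rightarrow> 'a \<Rightarrow> 'e \<Rightarrow> 'a" and ND :: "nat \<Rightarrow> 'e measure"
    and Q :: "'a \<Rightarrow> 'r \<Rightarrow> 'a" and NQ :: "'r measure"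
    and L Lpm LL bb \<omega> B \<zeta> p :: real
  assumes finite_Gs: "finite Gs" and card_Gs: "card Gs \<ge> 2"
    and gf_eq: "\<And>y. gf y = (1 / real (card Gs)) *\<^sub>R (\<Sum>i\<in>Gs. gfi i y)"
    and gfi_measurable: "\<And>i. i \<in> Gs \<Longrightarrow> gfi i \<in> borel_measurable borel"
    and gf_lipschitz: "\<And>y z. norm (gf y - gf z) \<le> L * norm (y - z)"
    and B_nonneg: "B \<ge> 0"
    and heterogeneity: "\<And>y. (\<Sum>i\<in>Gs. (norm (gfi i y - gf y))\<^sup>2) / real (card Gs) \<le> B * (norm (gf y))\<^sup>2 + \<zeta>\<^sup>2"
    and hessian_variance: "\<And>y z. (\<Sum>i\<in>Gs. (norm (gfi i y - gfi i z))\<^sup>2) / real (card Gs)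
                 - (norm (gf y - gf z))\<^sup>2 \<le> Lpm\<^sup>2 * (norm (y - z))\<^sup>2"
    and prob_ND: "\<And>i. i \<in> Gs \<Longrightarrow> prob_space (ND i)"
    and Dh_measurable: "\<And>i. i \<in> Gs \<Longrightarrow> (\<lambda>(y, z, e). Dh i y z e) \<in> borel \<Otimes>\<^sub>M borel \<Otimes>\<^sub>M ND i \<rightarrow>\<^sub>M borel"
    and Dh_integrable: "\<And>i y z. i \<in> Gs \<Longrightarrow> integrable (ND i) (Dh i y z)"
    and Dh_mean: "\<And>i y z. i \<in> Gs \<Longrightarrow> (\<integral>e. Dh i y z e \<partial>ND i) = gfi i y - gfi i z"
    and Dh_variance: "\<And>y z. (\<Sum>i\<in>Gs. \<integral>\<^sup>+ e. ennreal ((norm (Dh i y z e - (gfi i y - gfi i z)))\<^sup>2) \<partial>ND i)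
               / ennreal (real (card Gs)) \<le> ennreal (LL\<^sup>2 / bb * (norm (y - z))\<^sup>2)"
    and bb_pos: "bb > 0"
    and prob_NQ: "prob_space NQ" and \<omega>_nonneg: "\<omega> \<ge> 0"
    and Q_measurable: "(\<lambda>(y, r). Q y r) \<in> borel \<Otimes>\<^sub>M NQ \<rightarrow>\<^sub>M borel"
    and Q_integrable: "\<And>y. integrable NQ (Q y)"
    and Q_mean: "\<And>y. (\<integral>r. Q y r \<partial>NQ) = y"
    and Q_variance: "\<And>y. (\<integral>\<^sup>+ r. ennreal ((norm (Q y r - y))\<^sup>2) \<partial>NQ) \<le> ennreal (\<omega> * (norm y)\<^sup>2)"
    and p: "0 \<le> p" "p \<le> 1"
begin

abbreviation "G \<equiv> real (card Gs)"

abbreviation "seeds \<equiv> PiM Gs ND \<Otimes>\<^sub>M PiM Gs (\<lambda>_. NQ)"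

abbreviation "samples \<equiv> measure_pmf (bernoulli_pmf p) \<Otimes>\<^sub>M seeds"

text \<open>The bound on \<open>\<bbbE>\<parallel>Q(\<Delta>\<^sub>i(y, x)) - (\<nabla>f\<^sub>i(y) - \<nabla>f\<^sub>i(x))\<parallel>\<^sup>2\<close> that follows from unbiasedness
  and the variance bounds of the estimator \<open>\<Delta>\<^sub>i\<close> and of the compressor.\<close>

definition msg_moment :: "'a \<Rightarrow> 'a \<Rightarrow> nat \<Rightarrow> ennreal" where
  "msg_moment y x i = ennreal (1 + \<omega>) * (\<integral>\<^sup>+e. ennreal ((norm (Dh i y x e - (gfi i y - gfi i x)))\<^sup>2) \<partial>ND i)
     + ennreal (\<omega> * (norm (gfi i y - gfi i x))\<^sup>2)"

definition msg_noise :: real where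
  "msg_noise = (1 + \<omega>) * (LL\<^sup>2 / bb) + \<omega> * (L\<^sup>2 + Lpm\<^sup>2)"

declare Q_measurable[measurable]

lemma G_pos: "G > 0" using card_Gs by simp

lemma msg_noise_nonneg: "msg_noise \<ge> 0"
  using \<omega>_nonneg bb_pos by (simp add: msg_noise_def)

lemma sum_gfi_diff: "(\<Sum>i\<in>Gs. gfi i y - gfi i x) = G *\<^sub>R (gf y - gf x)"
  using G_pos by (simp add: gf_eq sum_subtractf scaleR_diff_right[symmetric])

lemma norm_gf_diff_sq_le: "(norm (gf y - gf x))\<^sup>2 \<le> L\<^sup>2 * (norm (y - x))\<^sup>2"
  using power_mono[OF gf_lipschitz[of y x]] by (simp add: power_mult_distrib)

lemma sum_msg_moment_le: "(\<Sum>i\<in>Gs. msg_moment y x i) \<le> ennreal (G * msg_noise * (norm (y - x))\<^sup>2)"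
proof -
  have var: "(\<Sum>i\<in>Gs. \<integral>\<^sup>+e. ennreal ((norm (Dh i y x e - (gfi i y - gfi i x)))\<^sup>2) \<partial>ND i)
      \<le> ennreal (G * (LL\<^sup>2 / bb * (norm (y - x))\<^sup>2))"
    by (rule ennreal_le_mult_of_divide_le[OF Dh_variance G_pos]) (use bb_pos in simp)
  have "(\<Sum>i\<in>Gs. (norm (gfi i y - gfi i x))\<^sup>2) \<le> G * ((norm (gf y - gf x))\<^sup>2 + Lpm\<^sup>2 * (norm (y - x))\<^sup>2)"
    using hessian_variance[of y x] G_pos by (simp add: field_simps)
  also have "\<dots> \<le> G * ((L\<^sup>2 + Lpm\<^sup>2) * (norm (y - x))\<^sup>2)"
    using norm_gf_diff_sq_le[of y x] G_pos by (simp add: algebra_simps)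
  finally have diff: "(\<Sum>i\<in>Gs. (norm (gfi i y - gfi i x))\<^sup>2) \<le> G * ((L\<^sup>2 + Lpm\<^sup>2) * (norm (y - x))\<^sup>2)" .
  have "(\<Sum>i\<in>Gs. msg_moment y x i)
      = ennreal (1 + \<omega>) * (\<Sum>i\<in>Gs. \<integral>\<^sup>+e. ennreal ((norm (Dh i y x e - (gfi i y - gfi i x)))\<^sup>2) \<partial>ND i)
        + ennreal (\<omega> * (\<Sum>i\<in>Gs. (norm (gfi i y - gfi i x))\<^sup>2))"
    using \<omega>_nonneg by (simp add: msg_moment_def sum.distrib sum_distrib_left sum_nonneg)
  also have "\<dots> \<le> ennreal (1 + \<omega>) * ennreal (G * (LL\<^sup>2 / bb * (norm (y - x))\<^sup>2))
      + ennreal (\<omega> * (G * ((L\<^sup>2 + Lpm\<^sup>2) * (norm (y - x))\<^sup>2)))"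
    using var diff \<omega>_nonneg by (intro add_mono mult_left_mono ennreal_leI) auto
  also have "\<dots> = ennreal ((1 + \<omega>) * (G * (LL\<^sup>2 / bb * (norm (y - x))\<^sup>2))
      + \<omega> * (G * ((L\<^sup>2 + Lpm\<^sup>2) * (norm (y - x))\<^sup>2)))"
  proof -
    have "ennreal (1 + \<omega>) * ennreal (G * (LL\<^sup>2 / bb * (norm (y - x))\<^sup>2))
        = ennreal ((1 + \<omega>) * (G * (LL\<^sup>2 / bb * (norm (y - x))\<^sup>2)))"
      using \<omega>_nonneg bb_pos G_pos by (intro ennreal_mult[symmetric]) auto
    then show ?thesis
      using \<omega>_nonneg bb_pos G_pos by (simp del: ennreal_plus add: ennreal_plus[symmetric])
  qed
  also have "\<dots> = ennreal (G * msg_noise * (norm (y - x))\<^sup>2)"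
    by (simp add: msg_noise_def algebra_simps)
  finally show ?thesis .
qed

lemma Dh_borel_measurable[measurable]: "i \<in> Gs \<Longrightarrow> Dh i y z \<in> borel_measurable (ND i)"
  using Dh_integrable by auto

lemma worker_msg_measurable:
  assumes i: "i \<in> Gs" and [measurable]: "Y \<in> borel_measurable N" "X \<in> borel_measurable N"
    "Gg \<in> borel_measurable N" "Ww \<in> N \<rightarrow>\<^sub>M samples"
  shows "(\<lambda>z. worker_msg gfi Q Dh i (Y z) (X z) (Gg z) (Ww z)) \<in> borel_measurable N"
proof -
  note [measurable] = gfi_measurable[OF i] Dh_measurable[OF i]
  have [measurable]: "(\<lambda>z. fst (snd (Ww z)) i) \<in> N \<rightarrow>\<^sub>M ND i" "(\<lambda>z. snd (snd (Ww z)) i) \<in> N \<rightarrow>\<^sub>M NQ"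
    using i by measurable
  have "(\<lambda>z. (Y z, X z, fst (snd (Ww z)) i)) \<in> N \<rightarrow>\<^sub>M borel \<Otimes>\<^sub>M borel \<Otimes>\<^sub>M ND i" by measurable
  from measurable_compose[OF this Dh_measurable[OF i]]
  have [measurable]: "(\<lambda>z. Dh i (Y z) (X z) (fst (snd (Ww z)) i)) \<in> borel_measurable N" by simp
  have "(\<lambda>z. (Dh i (Y z) (X z) (fst (snd (Ww z)) i), snd (snd (Ww z)) i)) \<in> N \<rightarrow>\<^sub>M borel \<Otimes>\<^sub>M NQ"
    by measurable
  from measurable_compose[OF this Q_measurable]
  have [measurable]: "(\<lambda>z. Q (Dh i (Y z) (X z) (fst (snd (Ww z)) i)) (snd (snd (Ww z)) i)) \<in> borel_measurable N"
    by simp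
  have "(\<lambda>z. fst (Ww z)) \<in> N \<rightarrow>\<^sub>M measure_pmf (bernoulli_pmf p)" by measurable
  from measurable_sets[OF this, of "{True}"]
  have "{z \<in> space N. fst (Ww z)} \<in> sets N" by (simp add: vimage_def Int_def conj_commute)
  then show ?thesis unfolding worker_msg_def by measurable
qed

lemma compressed_diff_measurable[measurable]:
  "i \<in> Gs \<Longrightarrow> (\<lambda>v. Q (Dh i y x (fst v i)) (snd v i)) \<in> borel_measurable seeds"
  by measurable

lemma worker_msg_measurable_samples[measurable]:
  "i \<in> Gs \<Longrightarrow> worker_msg gfi Q Dh i y x g \<in> borel_measurable samples"
  using worker_msg_measurable[of i "\<lambda>_. y" samples "\<lambda>_. x" "\<lambda>_. g" "\<lambda>w. w"] by simp

lemma prob_space_seeds: "prob_space seeds"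
proof -
  interpret A: prob_space "PiM Gs ND" by (rule prob_space_PiM) (use prob_ND in auto)
  interpret B: prob_space "PiM Gs (\<lambda>_. NQ)" by (rule prob_space_PiM) (use prob_NQ in auto)
  interpret pair_prob_space "PiM Gs ND" "PiM Gs (\<lambda>_. NQ)" ..
  show ?thesis by (rule prob_space_axioms)
qed

lemma prob_space_samples: "prob_space samples"
proof -
  interpret A: prob_space "measure_pmf (bernoulli_pmf p)" by (rule prob_space_measure_pmf)
  interpret B: prob_space seeds by (rule prob_space_seeds)
  interpret pair_prob_space "measure_pmf (bernoulli_pmf p)" seeds ..
  show ?thesis by (rule prob_space_axioms)
qed

lemma nn_integral_msg_sum_sq_le:
  "(\<integral>\<^sup>+ v. ennreal ((norm (w + (\<Sum>i\<in>Gs. a i *\<^sub>R (Q (Dh i y x (fst v i)) (snd v i) - (gfi i y - gfi i x)))))\<^sup>2) \<partial>seeds)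
     \<le> ennreal ((norm w)\<^sup>2) + (\<Sum>i\<in>Gs. ennreal ((a i)\<^sup>2) * msg_moment y x i)"
  unfolding msg_moment_def
  by (rule nn_integral_compressed_sum_sq_le[OF finite_Gs prob_ND prob_NQ Dh_integrable Dh_mean
        Q_measurable Q_integrable Q_mean Q_variance \<omega>_nonneg])


lemma mean_msg_error:
  "(\<integral>\<^sup>+w. ennreal ((norm ((1 / G) *\<^sub>R (\<Sum>i\<in>Gs. worker_msg gfi Q Dh i y x g w) - gf y))\<^sup>2) \<partial>samples)
     \<le> ennreal ((1 - p) * ((norm (g - gf x))\<^sup>2 + msg_noise / G * (norm (y - x))\<^sup>2))"
proof -
  have reset: "(1 / G) *\<^sub>R (\<Sum>i\<in>Gs. worker_msg gfi Q Dh i y x g (True, v)) - gf y = 0" for v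
    by (simp add: worker_msg_def gf_eq)
  have update: "(1 / G) *\<^sub>R (\<Sum>i\<in>Gs. worker_msg gfi Q Dh i y x g (False, v)) - gf y
      = (g - gf x) + (\<Sum>i\<in>Gs. (1 / G) *\<^sub>R (Q (Dh i y x (fst v i)) (snd v i) - (gfi i y - gfi i x)))" for v
  proof -
    have "(\<Sum>i\<in>Gs. worker_msg gfi Q Dh i y x g (False, v))
        = G *\<^sub>R g + (\<Sum>i\<in>Gs. Q (Dh i y x (fst v i)) (snd v i))"
      by (simp add: worker_msg_def sum.distrib sum_constant_scaleR)
    moreover have "(\<Sum>i\<in>Gs. (1 / G) *\<^sub>R (Q (Dh i y x (fst v i)) (snd v i) - (gfi i y - gfi i x)))
        = (1 / G) *\<^sub>R (\<Sum>i\<in>Gs. Q (Dh i y x (fst v i)) (snd v i)) - (gf y - gf x)"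
      using G_pos by (simp add: scaleR_sum_right[symmetric] sum_subtractf scaleR_diff_right gf_eq)
    ultimately show ?thesis
      using G_pos by (simp add: scaleR_add_right algebra_simps)
  qed
  have "(\<integral>\<^sup>+w. ennreal ((norm ((1 / G) *\<^sub>R (\<Sum>i\<in>Gs. worker_msg gfi Q Dh i y x g w) - gf y))\<^sup>2) \<partial>samples)
      = ennreal (1 - p) * (\<integral>\<^sup>+v. ennreal ((norm ((g - gf x)
          + (\<Sum>i\<in>Gs. (1 / G) *\<^sub>R (Q (Dh i y x (fst v i)) (snd v i) - (gfi i y - gfi i x)))))\<^sup>2) \<partial>seeds)"
    by (subst nn_integral_bernoulli_pair[OF p prob_space_seeds]) (measurable, simp add: reset update)
  also have "\<dots> \<le> ennreal (1 - p) * (ennreal ((norm (g - gf x))\<^sup>2) + (\<Sum>i\<in>Gs. ennreal ((1 / G)\<^sup>2) * msg_moment y x i))"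
    by (intro mult_left_mono nn_integral_msg_sum_sq_le) simp
  also have "(\<Sum>i\<in>Gs. ennreal ((1 / G)\<^sup>2) * msg_moment y x i) \<le> ennreal ((1 / G)\<^sup>2) * ennreal (G * msg_noise * (norm (y - x))\<^sup>2)"
    unfolding sum_distrib_left[symmetric] by (intro mult_left_mono sum_msg_moment_le) simp
  also have "ennreal ((1 / G)\<^sup>2) * ennreal (G * msg_noise * (norm (y - x))\<^sup>2) = ennreal (msg_noise / G * (norm (y - x))\<^sup>2)"
    using G_pos msg_noise_nonneg by (simp add: ennreal_mult[symmetric] power2_eq_square)
  finally show ?thesis
    using msg_noise_nonneg G_pos p by (simp add: ennreal_mult mult_left_mono add_left_mono)
qed

lemma nn_integral_msg_pair_diff_sq_le:
  assumes "i \<in> Gs" "l \<in> Gs"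
  shows "(\<integral>\<^sup>+v. ennreal ((norm (Q (Dh i y x (fst v i)) (snd v i) - Q (Dh l y x (fst v l)) (snd v l)))\<^sup>2) \<partial>seeds)
     \<le> ennreal ((norm ((gfi i y - gfi i x) - (gfi l y - gfi l x)))\<^sup>2) + msg_moment y x i + msg_moment y x l"
proof (cases "i = l")
  case False
  define a where "a j = (if j = i then 1 else if j = l then -1 else 0 :: real)" for j
  let ?X = "\<lambda>v j. Q (Dh j y x (fst v j)) (snd v j) - (gfi j y - gfi j x)"
  have "(\<Sum>j\<in>Gs. a j *\<^sub>R ?X v j) = (\<Sum>j\<in>Gs. (if j = i then ?X v j else 0) - (if j = l then ?X v j else 0))" for v
    using False by (intro sum.cong) (auto simp: a_def)
  then have "Q (Dh i y x (fst v i)) (snd v i) - Q (Dh l y x (fst v l)) (snd v l)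
     = ((gfi i y - gfi i x) - (gfi l y - gfi l x)) + (\<Sum>j\<in>Gs. a j *\<^sub>R ?X v j)" for v
    using assms finite_Gs by (simp add: sum_subtractf algebra_simps)
  moreover have "(\<Sum>j\<in>Gs. ennreal ((a j)\<^sup>2) * msg_moment y x j) = msg_moment y x i + msg_moment y x l"
  proof -
    have "(\<Sum>j\<in>Gs. ennreal ((a j)\<^sup>2) * msg_moment y x j)
        = (\<Sum>j\<in>Gs. (if j = i then msg_moment y x j else 0) + (if j = l then msg_moment y x j else 0))"
      using False by (intro sum.cong) (auto simp: a_def)
    then show ?thesis using assms finite_Gs by (simp add: sum.distrib)
  qed
  ultimately show ?thesis
    using nn_integral_msg_sum_sq_le[of "(gfi i y - gfi i x) - (gfi l y - gfi l x)" a y x]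
    by (simp add: add.assoc)
qed simp

lemma heterogeneity_nonneg: "0 \<le> B * (norm (gf y))\<^sup>2 + \<zeta>\<^sup>2"
  using B_nonneg by simp

lemma reset_spread_le:
  "(\<Sum>i\<in>Gs. \<Sum>l\<in>Gs. (norm (gfi i y - gfi l y))\<^sup>2) \<le> 2 * G\<^sup>2 * (B * (norm (gf y))\<^sup>2 + \<zeta>\<^sup>2)"
proof -
  have "(\<Sum>i\<in>Gs. \<Sum>l\<in>Gs. (norm (gfi i y - gfi l y))\<^sup>2) \<le> 2 * G * (\<Sum>i\<in>Gs. (norm (gfi i y - gf y))\<^sup>2)"
    by (rule sum_pairwise_norm_diff_sq_le[OF finite_Gs])
  also have "(\<Sum>i\<in>Gs. (norm (gfi i y - gf y))\<^sup>2) \<le> G * (B * (norm (gf y))\<^sup>2 + \<zeta>\<^sup>2)"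
    using heterogeneity[of y] G_pos by (simp add: field_simps)
  finally show ?thesis
    using G_pos by (simp add: power2_eq_square mult.assoc mult_left_mono)
qed

lemma sum_pairwise_gfi_diff_le:
  "(\<Sum>i\<in>Gs. \<Sum>l\<in>Gs. (norm ((gfi i y - gfi i x) - (gfi l y - gfi l x)))\<^sup>2) \<le> 2 * G\<^sup>2 * Lpm\<^sup>2 * (norm (y - x))\<^sup>2"
proof -
  have "(\<Sum>i\<in>Gs. \<Sum>l\<in>Gs. (norm ((gfi i y - gfi i x) - (gfi l y - gfi l x)))\<^sup>2)
      \<le> 2 * G * (\<Sum>i\<in>Gs. (norm ((gfi i y - gfi i x) - (gf y - gf x)))\<^sup>2)"
    by (rule sum_pairwise_norm_diff_sq_le[OF finite_Gs])
  also have "(\<Sum>i\<in>Gs. (norm ((gfi i y - gfi i x) - (gf y - gf x)))\<^sup>2)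
      = (\<Sum>i\<in>Gs. (norm (gfi i y - gfi i x))\<^sup>2) - G * (norm (gf y - gf x))\<^sup>2"
    by (rule sum_norm_diff_mean_sq) (simp add: sum_gfi_diff)
  also have "\<dots> \<le> G * (Lpm\<^sup>2 * (norm (y - x))\<^sup>2)"
    using hessian_variance[of y x] G_pos by (simp add: field_simps)
  finally show ?thesis
    using G_pos by (simp add: power2_eq_square mult.assoc mult_left_mono)
qed

lemma update_spread_le:
  "(\<integral>\<^sup>+v. (\<Sum>i\<in>Gs. \<Sum>l\<in>Gs. ennreal ((norm (Q (Dh i y x (fst v i)) (snd v i) - Q (Dh l y x (fst v l)) (snd v l)))\<^sup>2)) \<partial>seeds)
     \<le> ennreal (2 * G\<^sup>2 * (msg_noise + Lpm\<^sup>2) * (norm (y - x))\<^sup>2)"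
proof -
  let ?D = "\<lambda>i l. (norm ((gfi i y - gfi i x) - (gfi l y - gfi l x)))\<^sup>2"
  let ?S = "\<Sum>i\<in>Gs. msg_moment y x i"
  have "(\<integral>\<^sup>+v. (\<Sum>i\<in>Gs. \<Sum>l\<in>Gs. ennreal ((norm (Q (Dh i y x (fst v i)) (snd v i) - Q (Dh l y x (fst v l)) (snd v l)))\<^sup>2)) \<partial>seeds)
      = (\<Sum>i\<in>Gs. \<integral>\<^sup>+v. (\<Sum>l\<in>Gs. ennreal ((norm (Q (Dh i y x (fst v i)) (snd v i) - Q (Dh l y x (fst v l)) (snd v l)))\<^sup>2)) \<partial>seeds)"
    by (rule nn_integral_sum) measurable
  also have "\<dots> = (\<Sum>i\<in>Gs. \<Sum>l\<in>Gs. \<integral>\<^sup>+v. ennreal ((norm (Q (Dh i y x (fst v i)) (snd v i) - Q (Dh l y x (fst v l)) (snd v l)))\<^sup>2) \<partial>seeds)"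
    by (intro sum.cong refl nn_integral_sum) measurable
  also have "\<dots> \<le> (\<Sum>i\<in>Gs. \<Sum>l\<in>Gs. ennreal (?D i l) + msg_moment y x i + msg_moment y x l)"
    by (intro sum_mono nn_integral_msg_pair_diff_sq_le)
  also have "\<dots> = ennreal (\<Sum>i\<in>Gs. \<Sum>l\<in>Gs. ?D i l) + of_nat (card Gs) * ?S + of_nat (card Gs) * ?S"
    by (simp add: sum.distrib sum_nonneg sum_distrib_left[symmetric] mult.commute)
  also have "\<dots> \<le> ennreal (2 * G\<^sup>2 * Lpm\<^sup>2 * (norm (y - x))\<^sup>2)
      + of_nat (card Gs) * ennreal (G * msg_noise * (norm (y - x))\<^sup>2)
      + of_nat (card Gs) * ennreal (G * msg_noise * (norm (y - x))\<^sup>2)"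
    by (intro add_mono mult_left_mono ennreal_leI sum_pairwise_gfi_diff_le sum_msg_moment_le) simp_all
  also have "\<dots> = ennreal (2 * G\<^sup>2 * (msg_noise + Lpm\<^sup>2) * (norm (y - x))\<^sup>2)"
  proof -
    let ?n = "(norm (y - x))\<^sup>2"
    have "of_nat (card Gs) * ennreal (G * msg_noise * ?n) = ennreal (G * (G * msg_noise * ?n))"
      using G_pos msg_noise_nonneg by (simp add: ennreal_of_nat_eq_real_of_nat ennreal_mult)
    moreover have "ennreal (2 * G\<^sup>2 * Lpm\<^sup>2 * ?n) + ennreal (G * (G * msg_noise * ?n)) + ennreal (G * (G * msg_noise * ?n))
        = ennreal (2 * G\<^sup>2 * Lpm\<^sup>2 * ?n + G * (G * msg_noise * ?n) + G * (G * msg_noise * ?n))"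
      using G_pos msg_noise_nonneg by (simp del: ennreal_plus add: ennreal_plus[symmetric])
    moreover have "2 * G\<^sup>2 * Lpm\<^sup>2 * ?n + G * (G * msg_noise * ?n) + G * (G * msg_noise * ?n)
        = 2 * G\<^sup>2 * (msg_noise + Lpm\<^sup>2) * ?n"
      by (simp add: power2_eq_square algebra_simps)
    ultimately show ?thesis by simp
  qed
  finally show ?thesis .
qed

lemma msg_spread_le:
  "(\<integral>\<^sup>+w. (\<Sum>i\<in>Gs. \<Sum>l\<in>Gs. ennreal ((norm (worker_msg gfi Q Dh i y x g w - worker_msg gfi Q Dh l y x g w))\<^sup>2)) \<partial>samples)
     \<le> ennreal (2 * G\<^sup>2 * (p * (B * (norm (gf y))\<^sup>2 + \<zeta>\<^sup>2) + (1 - p) * ((msg_noise + Lpm\<^sup>2) * (norm (y - x))\<^sup>2)))"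
proof -
  interpret seeds: prob_space seeds by (rule prob_space_seeds)
  have "(\<integral>\<^sup>+w. (\<Sum>i\<in>Gs. \<Sum>l\<in>Gs. ennreal ((norm (worker_msg gfi Q Dh i y x g w - worker_msg gfi Q Dh l y x g w))\<^sup>2)) \<partial>samples)
      = ennreal p * (\<integral>\<^sup>+v. (\<Sum>i\<in>Gs. \<Sum>l\<in>Gs. ennreal ((norm (gfi i y - gfi l y))\<^sup>2)) \<partial>seeds)
      + ennreal (1 - p) * (\<integral>\<^sup>+v. (\<Sum>i\<in>Gs. \<Sum>l\<in>Gs.
            ennreal ((norm (Q (Dh i y x (fst v i)) (snd v i) - Q (Dh l y x (fst v l)) (snd v l)))\<^sup>2)) \<partial>seeds)"
    by (subst nn_integral_bernoulli_pair[OF p prob_space_seeds]) (measurable, simp add: worker_msg_def)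
  also have "\<dots> \<le> ennreal p * ennreal (2 * G\<^sup>2 * (B * (norm (gf y))\<^sup>2 + \<zeta>\<^sup>2))
      + ennreal (1 - p) * ennreal (2 * G\<^sup>2 * (msg_noise + Lpm\<^sup>2) * (norm (y - x))\<^sup>2)"
  proof (intro add_mono mult_left_mono update_spread_le)
    show "(\<integral>\<^sup>+v. (\<Sum>i\<in>Gs. \<Sum>l\<in>Gs. ennreal ((norm (gfi i y - gfi l y))\<^sup>2)) \<partial>seeds)
        \<le> ennreal (2 * G\<^sup>2 * (B * (norm (gf y))\<^sup>2 + \<zeta>\<^sup>2))"
      using reset_spread_le[of y] by (simp add: seeds.emeasure_space_1 sum_nonneg ennreal_leI)
  qed simp_all
  also have "\<dots> = ennreal (p * (2 * G\<^sup>2 * (B * (norm (gf y))\<^sup>2 + \<zeta>\<^sup>2))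
       + (1 - p) * (2 * G\<^sup>2 * (msg_noise + Lpm\<^sup>2) * (norm (y - x))\<^sup>2))"
    using p heterogeneity_nonneg[of y] msg_noise_nonneg by (simp add: ennreal_mult)
  also have "\<dots> = ennreal (2 * G\<^sup>2 * (p * (B * (norm (gf y))\<^sup>2 + \<zeta>\<^sup>2)
       + (1 - p) * ((msg_noise + Lpm\<^sup>2) * (norm (y - x))\<^sup>2)))"
    by (simp add: algebra_simps)
  finally show ?thesis .
qed

lemma L_nonneg: "L \<ge> 0"
proof -
  obtain e :: 'a where "e \<in> Basis" using nonempty_Basis by blast
  then have "0 < norm (e - 0)" by (simp add: norm_Basis)
  moreover have "0 \<le> L * norm (e - 0)" using gf_lipschitz[of e 0] norm_ge_zero order_trans by blast
  ultimately show ?thesis by (simp add: zero_le_mult_iff)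
qed

end

section \<open>The run of Byz-VR-MARINA\<close>

locale byz_vr_marina = marina_round +
  fixes f :: "'a \<Rightarrow> real" and M :: "'w measure" and F :: "nat \<Rightarrow> 'w measure"
    and \<gamma> c \<delta> :: real and x0 :: 'a and x g :: "nat \<Rightarrow> 'w \<Rightarrow> 'a" and gw :: "nat \<Rightarrow> nat \<Rightarrow> 'w \<Rightarrow> 'a"
    and W
  assumes f_gderiv: "\<And>y. GDERIV f y :> gf y" and f_bdd_below: "bdd_below (range f)"
    and prob_M: "prob_space M"
    and F_subalgebra: "\<And>k. subalgebra M (F k)" and F_mono: "\<And>k. subalgebra (F (Suc k)) (F k)"
    and p_pos: "0 < p" and \<gamma>_pos: "0 < \<gamma>" and c_nonneg: "0 \<le> c" and \<delta>_nonneg: "0 \<le> \<delta>"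
    and x_0: "\<And>s. x 0 s = x0" and g_adapted: "\<And>k. g k \<in> borel_measurable (F k)"
    and x_Suc: "\<And>k s. x (Suc k) s = x k s - \<gamma> *\<^sub>R g k s"
    and W_measurable: "\<And>k. W k \<in> F (Suc k) \<rightarrow>\<^sub>M samples"
    and W_indep: "\<And>k A S. A \<in> sets (F k) \<Longrightarrow> S \<in> sets samples \<Longrightarrow>
         measure M (A \<inter> {s \<in> space M. W k s \<in> S}) = measure M A * measure samples S"
    and gw_Suc: "\<And>k i s. i \<in> Gs \<Longrightarrow>
         gw (Suc k) i s = worker_msg gfi Q Dh i (x (Suc k) s) (x k s) (g k s) (W k s)"
    and robust: "\<And>k. (\<integral>\<^sup>+ s. ennreal ((norm (g (Suc k) s - (1 / G) *\<^sub>R (\<Sum>i\<in>Gs. gw (Suc k) i s)))\<^sup>2) \<partial>M)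
         \<le> ennreal (c * \<delta> / (G * (G - 1)))
           * (\<Sum>i\<in>Gs. \<Sum>l\<in>Gs. \<integral>\<^sup>+ s. ennreal ((norm (gw (Suc k) i s - gw (Suc k) l s))\<^sup>2) \<partial>M)"
begin

lemma c\<delta>_nonneg: "0 \<le> c * \<delta>"
  using c_nonneg \<delta>_nonneg by simp

lemma x_adapted: "x k \<in> borel_measurable (F k)"
proof (induction k)
  case 0
  then show ?case by (simp add: x_0[abs_def])
next
  case (Suc k)
  then have "(\<lambda>s. x k s - \<gamma> *\<^sub>R g k s) \<in> borel_measurable (F k)"
    using g_adapted[of k] by measurable
  then show ?case
    by (simp add: x_Suc[abs_def] measurable_from_subalg[OF F_mono])
qed

lemma x_measurable[measurable]: "x k \<in> borel_measurable M"
  by (rule measurable_from_subalg[OF F_subalgebra x_adapted])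

lemma g_measurable[measurable]: "g k \<in> borel_measurable M"
  by (rule measurable_from_subalg[OF F_subalgebra g_adapted])

lemma W_measurable_M[measurable]: "W k \<in> M \<rightarrow>\<^sub>M samples"
  by (rule measurable_from_subalg[OF F_subalgebra W_measurable])

declare f_gderiv[THEN gderiv_borel_measurable, measurable]
  and f_gderiv[THEN gderiv_continuous_on, THEN borel_measurable_continuous_onI, measurable]

definition step_msg where
  "step_msg i z w = worker_msg gfi Q Dh i (fst z - \<gamma> *\<^sub>R snd z) (fst z) (snd z) w"

lemma step_msg_measurable[measurable]:
  "i \<in> Gs \<Longrightarrow> (\<lambda>zw. step_msg i (fst zw) (snd zw)) \<in> borel_measurable ((borel \<Otimes>\<^sub>M borel) \<Otimes>\<^sub>M samples)"
  unfolding step_msg_def by (rule worker_msg_measurable) auto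

lemma gw_Suc_step_msg: "i \<in> Gs \<Longrightarrow> gw (Suc k) i s = step_msg i (x k s, g k s) (W k s)"
  by (simp add: gw_Suc x_Suc step_msg_def)

lemma step_msg_state_measurable[measurable]:
  "i \<in> Gs \<Longrightarrow> (\<lambda>s. step_msg i (x k s, g k s) (W k s)) \<in> borel_measurable M"
  using measurable_compose[of "\<lambda>s. ((x k s, g k s), W k s)" M, OF _ step_msg_measurable] by simp

lemma gw_measurable[measurable]:
  assumes "i \<in> Gs" shows "gw (Suc k) i \<in> borel_measurable M"
proof -
  have "gw (Suc k) i = (\<lambda>s. step_msg i (x k s, g k s) (W k s))"
    using assms by (simp add: fun_eq_iff gw_Suc_step_msg)
  with assms show ?thesis by simp
qed

text \<open>The new samples are independent of the current state \<open>(x\<^sup>k, g\<^sup>k)\<close>, so a round can be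
  analysed for a fixed state.\<close>

lemma nn_integral_step_le:
  assumes h: "h \<in> borel_measurable ((borel \<Otimes>\<^sub>M borel) \<Otimes>\<^sub>M samples)"
    and bound: "\<And>z. (\<integral>\<^sup>+w. h (z, w) \<partial>samples) \<le> b z"
  shows "(\<integral>\<^sup>+s. h ((x k s, g k s), W k s) \<partial>M) \<le> (\<integral>\<^sup>+s. b (x k s, g k s) \<partial>M)"
proof -
  have "(\<lambda>s. (x k s, g k s)) \<in> F k \<rightarrow>\<^sub>M borel \<Otimes>\<^sub>M borel"
    by (rule measurable_Pair[OF x_adapted g_adapted])
  then have "(\<integral>\<^sup>+s. h ((x k s, g k s), W k s) \<partial>M) = (\<integral>\<^sup>+s. \<integral>\<^sup>+w. h ((x k s, g k s), w) \<partial>samples \<partial>M)"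
    using W_indep by (intro nn_integral_indep_pair[OF prob_M F_subalgebra prob_space_samples _ _ _ h]) auto
  also have "\<dots> \<le> (\<integral>\<^sup>+s. b (x k s, g k s) \<partial>M)"
    by (intro nn_integral_mono bound)
  finally show ?thesis .
qed

definition err where "err k s = (norm (g k s - gf (x k s)))\<^sup>2"
definition grad_sq where "grad_sq k s = (norm (gf (x k s)))\<^sup>2"
definition step_sq where "step_sq k s = (norm (g k s))\<^sup>2"
definition gap where "gap k s = f (x k s) - (INF y. f y)"

lemma err_measurable[measurable]: "err k \<in> borel_measurable M"
  unfolding err_def by measurable

lemma grad_sq_measurable[measurable]: "grad_sq k \<in> borel_measurable M"
  unfolding grad_sq_def by measurable

lemma step_sq_measurable[measurable]: "step_sq k \<in> borel_measurable M"
  unfolding step_sq_def by measurable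

lemma gap_measurable[measurable]: "gap k \<in> borel_measurable M"
  unfolding gap_def by measurable

lemma norm_x_Suc_diff_sq: "(norm (x (Suc k) s - x k s))\<^sup>2 = \<gamma>\<^sup>2 * step_sq k s"
  using \<gamma>_pos by (simp add: x_Suc step_sq_def power_mult_distrib)

lemma mean_error_step:
  "(\<integral>\<^sup>+s. ennreal ((norm ((1 / G) *\<^sub>R (\<Sum>i\<in>Gs. gw (Suc k) i s) - gf (x (Suc k) s)))\<^sup>2) \<partial>M)
     \<le> (\<integral>\<^sup>+s. ennreal ((1 - p) * (err k s + msg_noise / G * \<gamma>\<^sup>2 * step_sq k s)) \<partial>M)"
proof -
  let ?h = "\<lambda>zw. ennreal ((norm ((1 / G) *\<^sub>R (\<Sum>i\<in>Gs. step_msg i (fst zw) (snd zw))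
      - gf (fst (fst zw) - \<gamma> *\<^sub>R snd (fst zw))))\<^sup>2)"
  let ?b = "\<lambda>z. ennreal ((1 - p) * ((norm (snd z - gf (fst z)))\<^sup>2
      + msg_noise / G * (norm ((fst z - \<gamma> *\<^sub>R snd z) - fst z))\<^sup>2))"
  have "(\<integral>\<^sup>+s. ennreal ((norm ((1 / G) *\<^sub>R (\<Sum>i\<in>Gs. gw (Suc k) i s) - gf (x (Suc k) s)))\<^sup>2) \<partial>M)
      = (\<integral>\<^sup>+s. ?h ((x k s, g k s), W k s) \<partial>M)"
    by (simp add: gw_Suc_step_msg x_Suc cong: sum.cong_simp)
  also have "\<dots> \<le> (\<integral>\<^sup>+s. ?b (x k s, g k s) \<partial>M)"
    by (rule nn_integral_step_le[where h = ?h and b = ?b])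
      (measurable, unfold step_msg_def fst_conv snd_conv, rule mean_msg_error)
  also have "\<dots> = (\<integral>\<^sup>+s. ennreal ((1 - p) * (err k s + msg_noise / G * \<gamma>\<^sup>2 * step_sq k s)) \<partial>M)"
    using norm_x_Suc_diff_sq[of k, unfolded x_Suc] by (simp only: fst_conv snd_conv err_def mult.assoc)
  finally show ?thesis .
qed

lemma spread_step:
  "(\<Sum>i\<in>Gs. \<Sum>l\<in>Gs. \<integral>\<^sup>+s. ennreal ((norm (gw (Suc k) i s - gw (Suc k) l s))\<^sup>2) \<partial>M)
     \<le> (\<integral>\<^sup>+s. ennreal (2 * G\<^sup>2 * (p * (B * grad_sq (Suc k) s + \<zeta>\<^sup>2)
            + (1 - p) * ((msg_noise + Lpm\<^sup>2) * \<gamma>\<^sup>2 * step_sq k s))) \<partial>M)"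
proof -
  let ?h = "\<lambda>zw. \<Sum>i\<in>Gs. \<Sum>l\<in>Gs. ennreal ((norm (step_msg i (fst zw) (snd zw) - step_msg l (fst zw) (snd zw)))\<^sup>2)"
  let ?b = "\<lambda>z. ennreal (2 * G\<^sup>2 * (p * (B * (norm (gf (fst z - \<gamma> *\<^sub>R snd z)))\<^sup>2 + \<zeta>\<^sup>2)
      + (1 - p) * ((msg_noise + Lpm\<^sup>2) * (norm ((fst z - \<gamma> *\<^sub>R snd z) - fst z))\<^sup>2)))"
  have "(\<Sum>i\<in>Gs. \<Sum>l\<in>Gs. \<integral>\<^sup>+s. ennreal ((norm (gw (Suc k) i s - gw (Suc k) l s))\<^sup>2) \<partial>M)
      = (\<Sum>i\<in>Gs. \<integral>\<^sup>+s. (\<Sum>l\<in>Gs. ennreal ((norm (gw (Suc k) i s - gw (Suc k) l s))\<^sup>2)) \<partial>M)"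
    by (intro sum.cong refl nn_integral_sum[symmetric]) measurable
  also have "\<dots> = (\<integral>\<^sup>+s. ?h ((x k s, g k s), W k s) \<partial>M)"
    by (subst nn_integral_sum[symmetric]) (simp_all add: gw_Suc_step_msg cong: sum.cong_simp)
  also have "\<dots> \<le> (\<integral>\<^sup>+s. ?b (x k s, g k s) \<partial>M)"
    by (rule nn_integral_step_le[where h = ?h and b = ?b])
      (measurable, unfold step_msg_def fst_conv snd_conv, rule msg_spread_le)
  also have "\<dots> = (\<integral>\<^sup>+s. ennreal (2 * G\<^sup>2 * (p * (B * grad_sq (Suc k) s + \<zeta>\<^sup>2)
      + (1 - p) * ((msg_noise + Lpm\<^sup>2) * \<gamma>\<^sup>2 * step_sq k s))) \<partial>M)"
    using norm_x_Suc_diff_sq[of k, unfolded x_Suc]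
    by (simp only: fst_conv snd_conv grad_sq_def x_Suc mult.assoc)
  finally show ?thesis .
qed

definition spread_weight :: real where
  "spread_weight = c * \<delta> / (G * (G - 1)) * (2 * G\<^sup>2)"

lemma spread_weight_nonneg: "spread_weight \<ge> 0"
  using c\<delta>_nonneg card_Gs by (simp add: spread_weight_def)

lemma spread_weight_le: "spread_weight \<le> 4 * c * \<delta>"
proof -
  have "G - 1 > 0" using card_Gs by simp
  then have "spread_weight = c * \<delta> * (2 * G / (G - 1))"
    using G_pos by (simp add: spread_weight_def field_simps power2_eq_square)
  also have "\<dots> \<le> c * \<delta> * 4"
    using \<open>G - 1 > 0\<close> card_Gs c\<delta>_nonneg by (intro mult_left_mono) (simp_all add: divide_le_eq)
  finally show ?thesis by simp
qed

lemma robust_error_step: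
  "(\<integral>\<^sup>+s. ennreal ((norm (g (Suc k) s - (1 / G) *\<^sub>R (\<Sum>i\<in>Gs. gw (Suc k) i s)))\<^sup>2) \<partial>M)
     \<le> (\<integral>\<^sup>+s. ennreal (spread_weight * (p * (B * grad_sq (Suc k) s + \<zeta>\<^sup>2)
            + (1 - p) * ((msg_noise + Lpm\<^sup>2) * \<gamma>\<^sup>2 * step_sq k s))) \<partial>M)"
proof -
  let ?Y = "\<lambda>s. p * (B * grad_sq (Suc k) s + \<zeta>\<^sup>2) + (1 - p) * ((msg_noise + Lpm\<^sup>2) * \<gamma>\<^sup>2 * step_sq k s)"
  have K: "0 \<le> c * \<delta> / (G * (G - 1))" using c\<delta>_nonneg card_Gs by simp
  have "(\<integral>\<^sup>+s. ennreal ((norm (g (Suc k) s - (1 / G) *\<^sub>R (\<Sum>i\<in>Gs. gw (Suc k) i s)))\<^sup>2) \<partial>M)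
      \<le> ennreal (c * \<delta> / (G * (G - 1))) * (\<integral>\<^sup>+s. ennreal (2 * G\<^sup>2 * ?Y s) \<partial>M)"
    using order_trans[OF robust[of k] mult_left_mono[OF spread_step[of k]]] by simp
  also have "\<dots> = (\<integral>\<^sup>+s. ennreal (c * \<delta> / (G * (G - 1)) * (2 * G\<^sup>2 * ?Y s)) \<partial>M)"
    using K p heterogeneity_nonneg msg_noise_nonneg
    by (intro nn_integral_ennreal_cmult[symmetric]) (auto simp: grad_sq_def step_sq_def)
  also have "\<dots> = (\<integral>\<^sup>+s. ennreal (spread_weight * ?Y s) \<partial>M)"
    by (simp add: spread_weight_def mult.assoc)
  finally show ?thesis .
qed

definition err_bound where
  "err_bound k s = (1 + p/2) * (1 - p) * (err k s + msg_noise / G * \<gamma>\<^sup>2 * step_sq k s)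
     + (1 + 2/p) * spread_weight * (p * (B * grad_sq (Suc k) s + \<zeta>\<^sup>2)
       + (1 - p) * ((msg_noise + Lpm\<^sup>2) * \<gamma>\<^sup>2 * step_sq k s))"

lemma err_bound_nonneg: "0 \<le> err_bound k s"
  using p p_pos heterogeneity_nonneg msg_noise_nonneg spread_weight_nonneg
  by (simp add: err_bound_def err_def step_sq_def grad_sq_def)

lemma aggregation_error_step:
  "(\<integral>\<^sup>+s. ennreal (err (Suc k) s) \<partial>M) \<le> (\<integral>\<^sup>+s. ennreal (err_bound k s) \<partial>M)"
proof -
  define gbar where "gbar s = (1 / G) *\<^sub>R (\<Sum>i\<in>Gs. gw (Suc k) i s)" for s
  let ?X = "\<lambda>s. (1 - p) * (err k s + msg_noise / G * \<gamma>\<^sup>2 * step_sq k s)"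
  let ?Y = "\<lambda>s. spread_weight * (p * (B * grad_sq (Suc k) s + \<zeta>\<^sup>2)
      + (1 - p) * ((msg_noise + Lpm\<^sup>2) * \<gamma>\<^sup>2 * step_sq k s))"
  have [measurable]: "gbar \<in> borel_measurable M" unfolding gbar_def by measurable
  have [measurable]: "?X \<in> borel_measurable M" by measurable
  have [measurable]: "?Y \<in> borel_measurable M" by measurable
  have nonneg: "0 \<le> ?X s" "0 \<le> ?Y s" for s
    using p heterogeneity_nonneg msg_noise_nonneg G_pos spread_weight_nonneg
    by (auto simp: err_def grad_sq_def step_sq_def)
  \<comment> \<open>Young's inequality with weight \<open>p/2\<close> separates the averaging error from the aggregation error.\<close>
  have "err (Suc k) s \<le> (1 + p/2) * (norm (gbar s - gf (x (Suc k) s)))\<^sup>2 + (1 + 2/p) * (norm (g (Suc k) s - gbar s))\<^sup>2"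
    for s
    using power2_norm_add_le_weighted[of "p/2" "gbar s - gf (x (Suc k) s)" "g (Suc k) s - gbar s"] p_pos
    by (simp add: err_def)
  then have "(\<integral>\<^sup>+s. ennreal (err (Suc k) s) \<partial>M)
      \<le> (\<integral>\<^sup>+s. ennreal (1 + p/2) * ennreal ((norm (gbar s - gf (x (Suc k) s)))\<^sup>2)
           + ennreal (1 + 2/p) * ennreal ((norm (g (Suc k) s - gbar s))\<^sup>2) \<partial>M)"
    using p_pos by (intro nn_integral_mono) (simp add: ennreal_mult[symmetric] ennreal_plus[symmetric] del: ennreal_plus)
  also have "\<dots> = ennreal (1 + p/2) * (\<integral>\<^sup>+s. ennreal ((norm (gbar s - gf (x (Suc k) s)))\<^sup>2) \<partial>M)
      + ennreal (1 + 2/p) * (\<integral>\<^sup>+s. ennreal ((norm (g (Suc k) s - gbar s))\<^sup>2) \<partial>M)"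
    by (simp add: nn_integral_add nn_integral_cmult)
  also have "\<dots> \<le> ennreal (1 + p/2) * (\<integral>\<^sup>+s. ennreal (?X s) \<partial>M) + ennreal (1 + 2/p) * (\<integral>\<^sup>+s. ennreal (?Y s) \<partial>M)"
    using mean_error_step[of k] robust_error_step[of k] unfolding gbar_def
    by (intro add_mono mult_left_mono) auto
  also have "\<dots> = (\<integral>\<^sup>+s. ennreal ((1 + p/2) * ?X s) + ennreal ((1 + 2/p) * ?Y s) \<partial>M)"
    using nonneg p_pos
    by (simp add: nn_integral_add nn_integral_ennreal_cmult[symmetric] del: ennreal_plus)
  also have "\<dots> = (\<integral>\<^sup>+s. ennreal ((1 + p/2) * ?X s + (1 + 2/p) * ?Y s) \<partial>M)"
    using nonneg p_pos by (intro nn_integral_cong) simp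
  finally show ?thesis by (simp add: err_bound_def mult.assoc)
qed

lemma gap_nonneg: "0 \<le> gap k s"
  using cINF_lower[OF f_bdd_below, of "x k s"] by (simp add: gap_def)

lemma descent_step:
  "gap (Suc k) s + \<gamma>/2 * grad_sq k s + \<gamma>/2 * (1 - L * \<gamma>) * step_sq k s \<le> gap k s + \<gamma>/2 * err k s"
proof -
  have "f (x (Suc k) s) \<le> f (x k s) + gf (x k s) \<bullet> (x (Suc k) s - x k s) + L / 2 * (norm (x (Suc k) s - x k s))\<^sup>2"
    by (rule gderiv_lipschitz_upper_bound[OF f_gderiv gf_lipschitz])
  also have "\<dots> = f (x k s) - \<gamma> * (g k s \<bullet> gf (x k s)) + L / 2 * (\<gamma>\<^sup>2 * step_sq k s)"
    by (simp add: norm_x_Suc_diff_sq) (simp add: x_Suc inner_commute)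
  finally have f_step: "f (x (Suc k) s) \<le> f (x k s) - \<gamma> * (g k s \<bullet> gf (x k s)) + L / 2 * (\<gamma>\<^sup>2 * step_sq k s)" .
  have "gap (Suc k) s + \<gamma>/2 * grad_sq k s + \<gamma>/2 * (1 - L * \<gamma>) * step_sq k s
      = f (x (Suc k) s) - (INF y. f y) + \<gamma>/2 * grad_sq k s + \<gamma>/2 * step_sq k s - L / 2 * (\<gamma>\<^sup>2 * step_sq k s)"
    by (simp add: gap_def field_simps power2_eq_square)
  also have "\<dots> \<le> f (x k s) - (INF y. f y) + \<gamma>/2 * grad_sq k s + \<gamma>/2 * step_sq k s - \<gamma> * (g k s \<bullet> gf (x k s))"
    using f_step by simp
  also have "\<dots> = gap k s + \<gamma>/2 * err k s"
    by (simp add: gap_def err_def step_sq_def grad_sq_def power2_norm_diff field_simps)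
  finally show ?thesis .
qed

lemma grad_sq_Suc_le: "grad_sq (Suc k) s \<le> 2 * grad_sq k s + 2 * L\<^sup>2 * \<gamma>\<^sup>2 * step_sq k s"
proof -
  have "grad_sq (Suc k) s = (norm (gf (x k s) + (gf (x (Suc k) s) - gf (x k s))))\<^sup>2"
    by (simp add: grad_sq_def)
  also have "\<dots> \<le> 2 * grad_sq k s + 2 * (norm (gf (x (Suc k) s) - gf (x k s)))\<^sup>2"
    unfolding grad_sq_def by (rule power2_norm_add_le)
  also have "(norm (gf (x (Suc k) s) - gf (x k s)))\<^sup>2 \<le> L\<^sup>2 * \<gamma>\<^sup>2 * step_sq k s"
    using norm_gf_diff_sq_le[of "x (Suc k) s" "x k s"] by (simp add: norm_x_Suc_diff_sq)
  finally show ?thesis by simp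
qed

lemma step_sq_le: "step_sq k s \<le> 2 * err k s + 2 * grad_sq k s"
  using power2_norm_add_le[of "g k s - gf (x k s)" "gf (x k s)"]
  by (simp add: step_sq_def err_def grad_sq_def)

lemma nn_integral_err_Suc_le:
  assumes "integrable M (err k)" "integrable M (step_sq k)" "integrable M (grad_sq (Suc k))"
  shows "(\<integral>\<^sup>+s. ennreal (err (Suc k) s) \<partial>M) \<le> ennreal (\<integral>s. err_bound k s \<partial>M)"
proof -
  have "integrable M (err_bound k)"
    unfolding err_bound_def[abs_def]
    by (intro Bochner_Integration.integrable_add integrable_mult_right assms
        finite_measure.integrable_const[OF prob_space.finite_measure[OF prob_M]])
  then show ?thesis
    using aggregation_error_step[of k] err_bound_nonneg by (simp add: nn_integral_eq_integral)
qed

context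
  assumes err_0: "(\<integral>\<^sup>+s. ennreal (err 0 s) \<partial>M) < \<infinity>" and L\<gamma>: "L * \<gamma> \<le> 1"
begin

lemma integrable_run:
  "integrable M (err k) \<and> integrable M (grad_sq k) \<and> integrable M (step_sq k) \<and> integrable M (gap k)"
proof (induction k)
  case 0
  have "integrable M (err 0)"
    using err_0 by (intro integrableI_nonneg) (auto simp: err_def)
  moreover have "grad_sq 0 = (\<lambda>_. (norm (gf x0))\<^sup>2)" "gap 0 = (\<lambda>_. f x0 - (INF y. f y))"
    by (simp_all add: fun_eq_iff grad_sq_def gap_def x_0)
  ultimately show ?case
    by (intro conjI integrable_nonneg_le[OF _ step_sq_measurable _ step_sq_le])
      (simp_all add: finite_measure.integrable_const[OF prob_space.finite_measure[OF prob_M]] step_sq_def)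
next
  case (Suc k)
  then have err: "integrable M (err k)" and grad: "integrable M (grad_sq k)"
    and step: "integrable M (step_sq k)" and gap: "integrable M (gap k)"
    by auto
  have grad': "integrable M (grad_sq (Suc k))"
    by (rule integrable_nonneg_le[OF _ grad_sq_measurable _ grad_sq_Suc_le])
      (simp add: grad step, simp add: grad_sq_def)
  have "(\<integral>\<^sup>+s. ennreal (err (Suc k) s) \<partial>M) < \<infinity>"
    using nn_integral_err_Suc_le[OF err step grad'] by (rule le_less_trans) simp
  then have err': "integrable M (err (Suc k))"
    by (intro integrableI_nonneg) (auto simp: err_def)
  have step': "integrable M (step_sq (Suc k))"
    by (rule integrable_nonneg_le[OF _ step_sq_measurable _ step_sq_le])
      (simp add: err' grad', simp add: step_sq_def)
  have "gap (Suc k) s \<le> gap k s + \<gamma>/2 * err k s" for s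
  proof -
    have "0 \<le> \<gamma>/2 * grad_sq k s" "0 \<le> \<gamma>/2 * (1 - L * \<gamma>) * step_sq k s"
      using L\<gamma> \<gamma>_pos by (simp_all add: grad_sq_def step_sq_def)
    then show ?thesis using descent_step[of k s] by linarith
  qed
  from integrable_nonneg_le[OF _ gap_measurable gap_nonneg this]
  have gap': "integrable M (gap (Suc k))" using gap err by simp
  from err' grad' step' gap' show ?case by simp
qed

lemma expected_descent:
  "(\<integral>s. gap (Suc k) s \<partial>M) + \<gamma>/2 * (\<integral>s. grad_sq k s \<partial>M) + \<gamma>/2 * (1 - L * \<gamma>) * (\<integral>s. step_sq k s \<partial>M)
     \<le> (\<integral>s. gap k s \<partial>M) + \<gamma>/2 * (\<integral>s. err k s \<partial>M)"
proof -
  have "(\<integral>s. gap (Suc k) s + \<gamma>/2 * grad_sq k s + \<gamma>/2 * (1 - L * \<gamma>) * step_sq k s \<partial>M)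
      \<le> (\<integral>s. gap k s + \<gamma>/2 * err k s \<partial>M)"
    by (rule integral_mono) (use integrable_run descent_step in auto)
  then show ?thesis using integrable_run by simp
qed

lemma expected_grad_sq_Suc_le:
  "(\<integral>s. grad_sq (Suc k) s \<partial>M) \<le> 2 * (\<integral>s. grad_sq k s \<partial>M) + 2 * L\<^sup>2 * \<gamma>\<^sup>2 * (\<integral>s. step_sq k s \<partial>M)"
proof -
  have "(\<integral>s. grad_sq (Suc k) s \<partial>M) \<le> (\<integral>s. 2 * grad_sq k s + 2 * L\<^sup>2 * \<gamma>\<^sup>2 * step_sq k s \<partial>M)"
    by (rule integral_mono) (use integrable_run grad_sq_Suc_le in auto)
  then show ?thesis using integrable_run by simp
qed

lemma expected_err_Suc_le:
  "(\<integral>s. err (Suc k) s \<partial>M)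
     \<le> (1 + p/2) * (1 - p) * ((\<integral>s. err k s \<partial>M) + msg_noise / G * \<gamma>\<^sup>2 * (\<integral>s. step_sq k s \<partial>M))
       + (1 + 2/p) * spread_weight * (p * (B * (\<integral>s. grad_sq (Suc k) s \<partial>M) + \<zeta>\<^sup>2)
         + (1 - p) * ((msg_noise + Lpm\<^sup>2) * \<gamma>\<^sup>2 * (\<integral>s. step_sq k s \<partial>M)))"
proof -
  interpret prob_space M by (rule prob_M)
  have "ennreal (\<integral>s. err (Suc k) s \<partial>M) = (\<integral>\<^sup>+s. ennreal (err (Suc k) s) \<partial>M)"
    using integrable_run by (intro nn_integral_eq_integral[symmetric]) (blast, simp add: err_def)
  also have "\<dots> \<le> ennreal (\<integral>s. err_bound k s \<partial>M)"
    using integrable_run by (intro nn_integral_err_Suc_le) auto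
  finally have "(\<integral>s. err (Suc k) s \<partial>M) \<le> (\<integral>s. err_bound k s \<partial>M)"
    using err_bound_nonneg by (simp add: integral_nonneg_AE)
  then show ?thesis
    using integrable_run by (simp add: err_bound_def prob_space)
qed

end

lemma constA_eq:
  "constA B L c \<delta> p G \<omega> LL bb Lpm
     = 3 * (1 - p) * (msg_noise / G) / p + 24 * c * \<delta> * (1 - p) * (msg_noise + Lpm\<^sup>2) / p\<^sup>2
       + 48 * B * L\<^sup>2 * c * \<delta> / p"
proof -
  define u where "u = \<omega> * L\<^sup>2 + (1 + \<omega>) * LL\<^sup>2 / bb"
  have noise: "msg_noise = u + \<omega> * Lpm\<^sup>2"
    by (simp add: msg_noise_def u_def algebra_simps)
  have A: "constA B L c \<delta> p G \<omega> LL bb Lpm = 48 * B * L\<^sup>2 * c * \<delta> / p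
      + 6 * (1 - p) / p * (4 * c * \<delta> / p + 1 / (2 * G)) * u
      + 6 * (1 - p) / p * (4 * c * \<delta> * (1 + \<omega>) / p + \<omega> / (2 * G)) * Lpm\<^sup>2"
    by (simp add: constA_def u_def)
  show ?thesis
    unfolding A noise using G_pos p_pos by (simp add: field_simps power2_eq_square)
qed

lemma constA_nonneg: "0 \<le> constA B L c \<delta> p G \<omega> LL bb Lpm"
  unfolding constA_eq using p p_pos G_pos msg_noise_nonneg c_nonneg \<delta>_nonneg B_nonneg
  by (intro add_nonneg_nonneg divide_nonneg_pos mult_nonneg_nonneg) auto

lemma stepsize_small:
  assumes "\<gamma>\<^sup>2 * constA B L c \<delta> p G \<omega> LL bb Lpm \<le> 1 - L * \<gamma>"
  shows "L * \<gamma> \<le> 1"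
  using assms mult_nonneg_nonneg[OF zero_le_power2 constA_nonneg, of \<gamma>] by linarith

lemma expected_lyapunov_step:
  assumes err_0: "(\<integral>\<^sup>+s. ennreal (err 0 s) \<partial>M) < \<infinity>"
    and step: "\<gamma>\<^sup>2 * constA B L c \<delta> p G \<omega> LL bb Lpm \<le> 1 - L * \<gamma>"
  shows "(\<integral>s. gap (Suc k) s \<partial>M) + \<gamma>/p * (\<integral>s. err (Suc k) s \<partial>M)
           + \<gamma>/2 * (1 - 48 * c * \<delta> * B / p) * (\<integral>s. grad_sq k s \<partial>M)
         \<le> (\<integral>s. gap k s \<partial>M) + \<gamma>/p * (\<integral>s. err k s \<partial>M) + 12 * \<gamma> * c * \<delta> * \<zeta>\<^sup>2 / p"
proof -
  note L\<gamma> = stepsize_small[OF step]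
  have nonneg: "0 \<le> (\<integral>s. err j s \<partial>M)" "0 \<le> (\<integral>s. step_sq j s \<partial>M)" "0 \<le> (\<integral>s. grad_sq j s \<partial>M)" for j
    by (simp_all add: integral_nonneg_AE err_def step_sq_def grad_sq_def)
  have "(\<integral>s. err (Suc k) s \<partial>M) \<le> (1 - p/2) * (\<integral>s. err k s \<partial>M)
      + p/2 * constA B L c \<delta> p G \<omega> LL bb Lpm * \<gamma>\<^sup>2 * (\<integral>s. step_sq k s \<partial>M)
      + 24 * c * \<delta> * B * (\<integral>s. grad_sq k s \<partial>M) + 12 * c * \<delta> * \<zeta>\<^sup>2"
    using spread_weight_nonneg spread_weight_le p p_pos B_nonneg msg_noise_nonneg G_pos nonneg
    by (intro error_recursion_le[where T = "msg_noise / G" and S = "msg_noise + Lpm\<^sup>2" and \<kappa> = spread_weight,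
          OF expected_err_Suc_le[OF err_0 L\<gamma>] expected_grad_sq_Suc_le[OF err_0 L\<gamma>]])
      (auto simp: constA_eq)
  then show ?thesis
    using lyapunov_step[OF expected_descent[OF err_0 L\<gamma>]] p_pos \<gamma>_pos step nonneg by simp
qed

lemma average_expected_grad_sq_le:
  assumes err_0: "(\<integral>\<^sup>+s. ennreal (err 0 s) \<partial>M) < \<infinity>"
    and step: "\<gamma>\<^sup>2 * constA B L c \<delta> p G \<omega> LL bb Lpm \<le> 1 - L * \<gamma>" and het: "48 * c * B * \<delta> < p"
  shows "(\<Sum>k<Suc K. \<integral>s. grad_sq k s \<partial>M) / real (Suc K)
     \<le> 2 / (\<gamma> * (1 - 48 * B * c * \<delta> / p) * real (K + 1)) * ((\<integral>s. gap 0 s \<partial>M) + \<gamma> / p * (\<integral>s. err 0 s \<partial>M))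
       + 24 * c * \<delta> * \<zeta>\<^sup>2 / (p - 48 * B * c * \<delta>)"
proof -
  define \<Phi> where "\<Phi> k = (\<integral>s. gap k s \<partial>M) + \<gamma> / p * (\<integral>s. err k s \<partial>M)" for k
  define \<alpha> where "\<alpha> = \<gamma>/2 * (1 - 48 * c * \<delta> * B / p)"
  define \<beta> where "\<beta> = 12 * \<gamma> * c * \<delta> * \<zeta>\<^sup>2 / p"
  have "\<Phi> (Suc k) + \<alpha> * (\<integral>s. grad_sq k s \<partial>M) \<le> \<Phi> k + \<beta>" for k
    using expected_lyapunov_step[OF err_0 step, of k] by (simp add: \<Phi>_def \<alpha>_def \<beta>_def mult.assoc)
  moreover have "\<Phi> k \<ge> 0" for k
    using gap_nonneg p_pos \<gamma>_pos by (simp add: \<Phi>_def integral_nonneg_AE err_def)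
  moreover have "\<alpha> > 0"
    using het p_pos \<gamma>_pos by (simp add: \<alpha>_def field_simps)
  ultimately have "(\<Sum>k<Suc K. \<integral>s. grad_sq k s \<partial>M) / real (Suc K) \<le> \<Phi> 0 / (\<alpha> * real (Suc K)) + \<beta> / \<alpha>"
    by (rule average_le_of_telescope)
  moreover have "\<Phi> 0 / (\<alpha> * real (Suc K)) = 2 / (\<gamma> * (1 - 48 * B * c * \<delta> / p) * real (K + 1)) * \<Phi> 0"
    by (simp add: \<alpha>_def field_simps mult_ac)
  moreover have "\<beta> / \<alpha> = 24 * c * \<delta> * \<zeta>\<^sup>2 / (p - 48 * B * c * \<delta>)"
    using het p_pos \<gamma>_pos by (simp add: \<alpha>_def \<beta>_def field_simps mult_ac)
  ultimately show ?thesis by (simp add: \<Phi>_def)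
qed

lemma lyapunov_0_infinite:
  assumes "(\<integral>\<^sup>+s. ennreal (err 0 s) \<partial>M) = \<infinity>"
  shows "(\<integral>\<^sup>+ s. ennreal (f x0 - (INF y. f y) + \<gamma> / p * (norm (g 0 s - gf x0))\<^sup>2) \<partial>M) = \<infinity>"
proof -
  have "(\<integral>\<^sup>+s. ennreal (\<gamma> / p) * ennreal (err 0 s) \<partial>M)
      \<le> (\<integral>\<^sup>+ s. ennreal (f x0 - (INF y. f y) + \<gamma> / p * (norm (g 0 s - gf x0))\<^sup>2) \<partial>M)"
    using gap_nonneg[of 0] p_pos \<gamma>_pos
    by (intro nn_integral_mono) (simp add: ennreal_mult[symmetric] err_def gap_def x_0)
  moreover have "(\<integral>\<^sup>+s. ennreal (\<gamma> / p) * ennreal (err 0 s) \<partial>M) = \<infinity>"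
    using assms p_pos \<gamma>_pos by (simp add: nn_integral_cmult ennreal_mult_top)
  ultimately show ?thesis by (simp add: top_unique)
qed

lemma lyapunov_0_eq:
  assumes "(\<integral>\<^sup>+s. ennreal (err 0 s) \<partial>M) < \<infinity>"
  shows "(\<integral>\<^sup>+ s. ennreal (f x0 - (INF y. f y) + \<gamma> / p * (norm (g 0 s - gf x0))\<^sup>2) \<partial>M)
    = ennreal ((\<integral>s. gap 0 s \<partial>M) + \<gamma> / p * (\<integral>s. err 0 s \<partial>M))"
proof -
  interpret prob_space M by (rule prob_M)
  have "integrable M (err 0)"
    using assms by (intro integrableI_nonneg) (auto simp: err_def)
  moreover have "gap 0 = (\<lambda>_. f x0 - (INF y. f y))"
    by (simp add: fun_eq_iff gap_def x_0)
  ultimately have "integrable M (\<lambda>s. gap 0 s + \<gamma> / p * err 0 s)" by simp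
  then have "(\<integral>\<^sup>+ s. ennreal (gap 0 s + \<gamma> / p * err 0 s) \<partial>M) = ennreal (\<integral>s. gap 0 s + \<gamma> / p * err 0 s \<partial>M)"
    using gap_nonneg p_pos \<gamma>_pos by (intro nn_integral_eq_integral) (auto simp: err_def)
  moreover have "f x0 - (INF y. f y) + \<gamma> / p * (norm (g 0 s - gf x0))\<^sup>2 = gap 0 s + \<gamma> / p * err 0 s" for s
    by (simp add: gap_def err_def x_0)
  ultimately show ?thesis
    using \<open>integrable M (err 0)\<close> \<open>gap 0 = _\<close> by (simp only:) (simp add: prob_space)
qed

lemma average_grad_sq_le:
  assumes stepsize: "\<gamma> \<le> 1 / (L + sqrt (constA B L c \<delta> p G \<omega> LL bb Lpm))" and het: "48 * c * B * \<delta> < p"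
  shows "(\<integral>\<^sup>+ k. (\<integral>\<^sup>+ s. ennreal ((norm (gf (x k s)))\<^sup>2) \<partial>M) \<partial>measure_pmf (pmf_of_set {0..K}))
     \<le> ennreal (2 / (\<gamma> * (1 - 48 * B * c * \<delta> / p) * real (K + 1)))
         * (\<integral>\<^sup>+ s. ennreal (f x0 - (INF y. f y) + \<gamma> / p * (norm (g 0 s - gf x0))\<^sup>2) \<partial>M)
       + ennreal (24 * c * \<delta> * \<zeta>\<^sup>2 / (p - 48 * B * c * \<delta>))"
    (is "?lhs \<le> ennreal ?C * ?\<Phi> + ennreal ?D")
proof -
  have "0 < 1 - 48 * B * c * \<delta> / p" using het p_pos by (simp add: field_simps)
  then have C_pos: "0 < ?C" using \<gamma>_pos by simp
  show ?thesis
  proof (cases "(\<integral>\<^sup>+s. ennreal (err 0 s) \<partial>M) = \<infinity>")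
  case True
  have "ennreal ?C \<noteq> 0" by (simp only: ennreal_eq_0_iff not_le) (rule C_pos)
  with lyapunov_0_infinite[OF True] have "ennreal ?C * ?\<Phi> = \<infinity>"
    unfolding infinity_ennreal_def ennreal_mult_eq_top_iff by blast
  then show ?thesis by simp
next
  case False
  then have err_0: "(\<integral>\<^sup>+s. ennreal (err 0 s) \<partial>M) < \<infinity>" by (simp add: top.not_eq_extremum)
  have step: "\<gamma>\<^sup>2 * constA B L c \<delta> p G \<omega> LL bb Lpm \<le> 1 - L * \<gamma>"
    by (rule stepsize_condition[OF \<gamma>_pos stepsize constA_nonneg L_nonneg])
  have "integrable M (grad_sq k)" for k using integrable_run[OF err_0 stepsize_small[OF step]] by blast
  then have "(\<integral>\<^sup>+ s. ennreal ((norm (gf (x k s)))\<^sup>2) \<partial>M) = ennreal (\<integral>s. grad_sq k s \<partial>M)" for k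
    unfolding grad_sq_def[symmetric] by (rule nn_integral_eq_integral) (simp add: grad_sq_def)
  then have "?lhs = ennreal ((\<Sum>k<Suc K. \<integral>s. grad_sq k s \<partial>M) / real (Suc K))"
    by (simp add: nn_integral_pmf_of_set_interval integral_nonneg_AE grad_sq_def del: of_nat_Suc)
  also have "\<dots> \<le> ennreal (?C * ((\<integral>s. gap 0 s \<partial>M) + \<gamma> / p * (\<integral>s. err 0 s \<partial>M)) + ?D)"
    by (intro ennreal_leI average_expected_grad_sq_le[OF err_0 step het])
  also have "\<dots> = ennreal ?C * ?\<Phi> + ennreal ?D"
  proof -
    have "0 \<le> ?D" using het c_nonneg \<delta>_nonneg by (intro divide_nonneg_pos) (auto simp: mult_ac)
    then show ?thesis
      unfolding lyapunov_0_eq[OF err_0] using C_pos p_pos \<gamma>_pos gap_nonneg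
      by (intro ennreal_mult_add) (auto simp: integral_nonneg_AE err_def)
  qed
  finally show ?thesis .
  qed
qed

end


theorem theorem1:
  fixes M :: "'w measure" and F :: "nat \<Rightarrow> 'w measure"
    and n m :: nat and Gs :: "nat set" and \<delta> :: real
    and fij :: "nat \<Rightarrow> nat \<Rightarrow> 'a::euclidean_space \<Rightarrow> real"
    and dfij :: "nat \<Rightarrow> nat \<Rightarrow> 'a \<Rightarrow> 'a"
    and L B \<zeta> Lpm LL c \<omega> \<gamma> p :: real and b :: nat
    and ND :: "nat \<Rightarrow> 'e measure"
    and Dh :: "nat \<Rightarrow> 'a \<Rightarrow> 'a \<Rightarrow> 'e \<Rightarrow> 'a"
    and NQ :: "'r measure" and Q :: "'a \<Rightarrow> 'r \<Rightarrow> 'a"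
    and x0 :: 'a
    and x g :: "nat \<Rightarrow> 'w \<Rightarrow> 'a"
    and gw :: "nat \<Rightarrow> nat \<Rightarrow> 'w \<Rightarrow> 'a"
    and cc :: "nat \<Rightarrow> 'w \<Rightarrow> bool"
    and \<xi> :: "nat \<Rightarrow> nat \<Rightarrow> 'w \<Rightarrow> 'e"
    and \<eta> :: "nat \<Rightarrow> nat \<Rightarrow> 'w \<Rightarrow> 'r"
    and K :: nat
  defines "G \<equiv> real (card Gs)"
    and "f \<equiv> glob_f Gs m fij"
    and "gradf \<equiv> glob_grad Gs m dfij"
    and "gradfi \<equiv> loc_grad m dfij"
    and "fstar \<equiv> (INF y. glob_f Gs m fij y)"
  assumes \<comment> \<open>workers: good set Gs, Byzantine set {..<n} - Gs\<close>
    workers: "Gs \<subseteq> {..<n}" "card Gs \<ge> 2"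
    and byz: "real (card ({..<n} - Gs)) \<le> \<delta> * real n" "0 \<le> \<delta>" "\<delta> < 1/2"
    and finite_sum: "m \<ge> 1"
    and grads: "\<And>i j y. i \<in> Gs \<Longrightarrow> j < m \<Longrightarrow> GDERIV (fij i j) y :> dfij i j y"
    and A1: "\<And>y z. norm (gradf y - gradf z) \<le> L * norm (y - z)" "bdd_below (range f)"
    and A2: "B \<ge> 0" "\<And>y. (\<Sum>i\<in>Gs. (norm (gradfi i y - gradf y))^2) / G \<le> B * (norm (gradf y))^2 + \<zeta>^2"
    and A3: "Lpm \<ge> 0" "\<And>y z. (\<Sum>i\<in>Gs. (norm (gradfi i y - gradfi i z))^2) / G
                 - (norm (gradf y - gradf z))^2 \<le> Lpm^2 * (norm (y - z))^2"
    \<comment> \<open>(A4): the estimator of worker i at (y,z) is Dh i y z e, with e drawn from ND i\<close>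
    and A4: "b \<ge> 1" "LL \<ge> 0"
      "\<And>i. i \<in> Gs \<Longrightarrow> prob_space (ND i)"
      "\<And>i. i \<in> Gs \<Longrightarrow> (\<lambda>(y, z, e). Dh i y z e) \<in> borel \<Otimes>\<^sub>M borel \<Otimes>\<^sub>M ND i \<rightarrow>\<^sub>M borel"
      "\<And>i y z. i \<in> Gs \<Longrightarrow> integrable (ND i) (Dh i y z)"
      "\<And>i y z. i \<in> Gs \<Longrightarrow> (\<integral>e. Dh i y z e \<partial>ND i) = gradfi i y - gradfi i z"
      "\<And>y z. (\<Sum>i\<in>Gs. \<integral>\<^sup>+ e. ennreal ((norm (Dh i y z e - (gradfi i y - gradfi i z)))^2) \<partial>ND i) / ennreal G
               \<le> ennreal (LL^2 / real b * (norm (y - z))^2)"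
    \<comment> \<open>compressor: Q y r with r drawn from NQ\<close>
    and compressor: "prob_space NQ" "\<omega> \<ge> 0"
      "(\<lambda>(y, r). Q y r) \<in> borel \<Otimes>\<^sub>M NQ \<rightarrow>\<^sub>M borel"
      "\<And>y. integrable NQ (Q y)"
      "\<And>y. (\<integral>r. Q y r \<partial>NQ) = y"
      "\<And>y. (\<integral>\<^sup>+ r. ennreal ((norm (Q y r - y))^2) \<partial>NQ) \<le> ennreal (\<omega> * (norm y)^2)"
    and space: "prob_space M"
      "\<And>k. subalgebra M (F k)" "\<And>k. subalgebra (F (Suc k)) (F k)"
    and params: "0 < p" "p \<le> 1" "0 < \<gamma>" "c > 0"
    and init: "\<And>\<omega>'. x 0 \<omega>' = x0" "\<And>k. g k \<in> borel_measurable (F k)"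
    and step_x: "\<And>k \<omega>'. x (Suc k) \<omega>' = x k \<omega>' - \<gamma> *\<^sub>R g k \<omega>'"
    and fresh: "\<And>k. (\<lambda>\<omega>'. (cc k \<omega>', restrict (\<lambda>i. \<xi> k i \<omega>') Gs, restrict (\<lambda>i. \<eta> k i \<omega>') Gs))
         \<in> F (Suc k) \<rightarrow>\<^sub>M measure_pmf (bernoulli_pmf p) \<Otimes>\<^sub>M (PiM Gs ND \<Otimes>\<^sub>M PiM Gs (\<lambda>_. NQ))"
      "\<And>k A S. A \<in> sets (F k) \<Longrightarrow>
         S \<in> sets (measure_pmf (bernoulli_pmf p) \<Otimes>\<^sub>M (PiM Gs ND \<Otimes>\<^sub>M PiM Gs (\<lambda>_. NQ))) \<Longrightarrow>
         measure M (A \<inter> {\<omega>' \<in> space M. (cc k \<omega>', restrict (\<lambda>i. \<xi> k i \<omega>') Gs, restrict (\<lambda>i. \<eta> k i \<omega>') Gs) \<in> S})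
         = measure M A * measure (measure_pmf (bernoulli_pmf p) \<Otimes>\<^sub>M (PiM Gs ND \<Otimes>\<^sub>M PiM Gs (\<lambda>_. NQ))) S"
    and good_update: "\<And>k i \<omega>'. i \<in> Gs \<Longrightarrow> gw (Suc k) i \<omega>' =
         (if cc k \<omega>' then gradfi i (x (Suc k) \<omega>')
          else g k \<omega>' + Q (Dh i (x (Suc k) \<omega>') (x k \<omega>') (\<xi> k i \<omega>')) (\<eta> k i \<omega>'))"
    and R: "\<And>k. (\<integral>\<^sup>+ \<omega>'. ennreal ((norm (g (Suc k) \<omega>' - (1 / G) *\<^sub>R (\<Sum>i\<in>Gs. gw (Suc k) i \<omega>')))^2) \<partial>M)
         \<le> ennreal (c * \<delta> / (G * (G - 1)))
           * (\<Sum>i\<in>Gs. \<Sum>l\<in>Gs. \<integral>\<^sup>+ \<omega>'. ennreal ((norm (gw (Suc k) i \<omega>' - gw (Suc k) l \<omega>'))^2) \<partial>M)"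
    and stepsize: "\<gamma> \<le> 1 / (L + sqrt (constA B L c \<delta> p G \<omega> LL (real b) Lpm))"
    and het: "48 * c * B * \<delta> < p"
  shows "(\<integral>\<^sup>+ k. (\<integral>\<^sup>+ \<omega>'. ennreal ((norm (gradf (x k \<omega>')))^2) \<partial>M) \<partial>measure_pmf (pmf_of_set {0..K}))
     \<le> ennreal (2 / (\<gamma> * (1 - 48 * B * c * \<delta> / p) * real (K + 1)))
         * (\<integral>\<^sup>+ \<omega>'. ennreal (f x0 - fstar + \<gamma> / p * (norm (g 0 \<omega>' - gradf x0))^2) \<partial>M)
       + ennreal (24 * c * \<delta> * \<zeta>^2 / (p - 48 * B * c * \<delta>))"
proof -
  have finite_Gs: "finite Gs" using workers(1) by (rule finite_subset) simp
  have gradfi_gderiv: "GDERIV (loc_f m fij i) y :> gradfi i y" if "i \<in> Gs" for i y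
    unfolding gradfi_def by (rule gderiv_loc_f) (rule grads[OF that])
  have gradf_eq: "gradf y = (1 / real (card Gs)) *\<^sub>R (\<Sum>i\<in>Gs. gradfi i y)" for y
    by (simp add: gradf_def glob_grad_def gradfi_def)
  interpret byz_vr_marina Gs gradfi gradf Dh ND Q NQ L Lpm LL "real b" \<omega> B \<zeta> p f M F \<gamma> c \<delta> x0 x g gw
    "\<lambda>k s. (cc k s, restrict (\<lambda>i. \<xi> k i s) Gs, restrict (\<lambda>i. \<eta> k i s) Gs)"
  proof (intro byz_vr_marina.intro marina_round.intro byz_vr_marina_axioms.intro finite_Gs gradf_eq
      gderiv_borel_measurable[OF gradfi_gderiv] A1 A2[unfolded G_def] A3(2)[unfolded G_def]
      A4(3-7)[unfolded G_def] compressor space params init step_x fresh R[unfolded G_def])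
    show "GDERIV f y :> gradf y" for y
      unfolding f_def gradf_def by (rule gderiv_glob_f) (rule grads)
  qed (use workers(2) A4(1) params byz(2) good_update in \<open>simp_all add: worker_msg_def\<close>)
  show ?thesis
    using average_grad_sq_le[OF _ het] stepsize unfolding fstar_def f_def G_def by simp
qed

end
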